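(* The critical discrete functional equation $(DFE_c)$, i.e. $u(x)=\min_{e\in\mathbf E_x}\big(u(\mathrm t(e))+\sigma_c(-e)\big)$ for all $x\in\mathbf V$, admits a solution $u:\mathbf V\to\mathbb R$.
   Context: Network $\Gamma=\bigcup_{\gamma\in\mathcal E}\gamma([0,1])\subset\mathbb R^N$, $\mathcal E$ finite set of regular simple oriented arcs (possibly closed, $\mathcal E^*$ = closed arcs), closed under inversion $\tilde\gamma(s)=\gamma(1-s)$, interiors pairwise disjoint except $\gamma,\tilde\gamma$; vertices $\mathbf V$ = endpoints; $\Gamma$ connected. Hamiltonians $H_\gamma:[0,1]\times\mathbb R\to\mathbb R$, $H_{\tilde\gamma}(s,p)=H_\gamma(1-s,-p)$, continuous, coercive in $p$, quasiconvex in $p$ with $\mathrm{Int}\{H_\gamma(s,\cdot)\le b\}=\{H_\gamma(s,\cdot)<b\}$. $a_\gamma=\max_s\min_pH_\gamma(s,p)$; $c_\gamma$ = least $a$ such that $H_\gamma(s,u')=a$ has a viscosity subsolution in $(0,1)$, continuous on $[0,1]$, with $u(0)=u(1)$; $a_0=\max\{\max_{\gamma\in\mathcal E\setminus\mathcal E^*}a_\gamma,\max_{\gamma\in\mathcal E^*}c_\gamma\}$; assume $s\mapsto\min_pH_\gamma(s,p)$ is constant whenever $a_\gamma=a_0$. Graph $\mathbf X=(\mathbf V,\mathbf E)$ with bijection $\Psi:\mathbf E\to\mathcal E$, $\mathrm o(e)=\Psi(e)(0)$, $\mathrm t(e)=\Psi(e)(1)$, $-e=\Psi^{-1}(\widetilde{\Psi(e)})$,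 $\mathbf E_x=\{e:\mathrm o(e)=x\}$; for $a\ge a_0$, $\sigma_a(e)=\int_0^1\max\{p:H_{\Psi(e)}(t,p)=a\}\,dt$. A subsolution of $(DFE_a)$ is $u$ with $u(\mathrm t(e))-u(\mathrm o(e))\le\sigma_a(e)$ for all $e$; the critical value is $c=\min\{a\ge a_0:(DFE_a)$ admits a subsolution$\}$ (this minimum exists). *)

theory Defs
  imports "HOL-Analysis.Analysis"
begin

text \<open>Abstract network: a finite set E of oriented arcs (edges), with origin
  src, terminal point tgt, inversion rv (e \<mapsto> -e), and a Hamiltonian H e on
  each arc, H e :: [0,1] \<times> R \<rightarrow> R.  Closed arcs are those with src e = tgt e.\<close>

definition vertices :: "'e set \<Rightarrow> ('e \<Rightarrow> 'v) \<Rightarrow> ('e \<Rightarrow> 'v) \<Rightarrow> 'v set" where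
  "vertices E src tgt = src ` E \<union> tgt ` E"

definition out_edges :: "'e set \<Rightarrow> ('e \<Rightarrow> 'v) \<Rightarrow> 'v \<Rightarrow> 'e set" where
  "out_edges E src x = {e \<in> E. src e = x}"

definition ham_ok :: "(real \<Rightarrow> real \<Rightarrow> real) \<Rightarrow> bool" where
  "ham_ok h \<longleftrightarrow>
     continuous_on ({0..1} \<times> UNIV) (\<lambda>(s,p). h s p)
   \<and> (\<forall>M. \<exists>R. \<forall>s\<in>{0..1}. \<forall>p. \<bar>p\<bar> \<ge> R \<longrightarrow> h s p \<ge> M)
   \<and> (\<forall>s\<in>{0..1}. \<forall>b. convex {p. h s p \<le> b})
   \<and> (\<forall>s\<in>{0..1}. \<forall>b. interior {p. h s p \<le> b} = {p. h s p < b})"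

definition network_ok ::
  "'e set \<Rightarrow> ('e \<Rightarrow> 'v) \<Rightarrow> ('e \<Rightarrow> 'v) \<Rightarrow> ('e \<Rightarrow> 'e) \<Rightarrow> ('e \<Rightarrow> real \<Rightarrow> real \<Rightarrow> real) \<Rightarrow> bool" where
  "network_ok E src tgt rv H \<longleftrightarrow>
     finite E \<and> E \<noteq> {}
   \<and> (\<forall>e\<in>E. rv e \<in> E \<and> rv (rv e) = e \<and> rv e \<noteq> e
            \<and> src (rv e) = tgt e \<and> tgt (rv e) = src e)
   \<and> (\<forall>e\<in>E. \<forall>s p. H (rv e) s p = H e (1 - s) (- p))
   \<and> (\<forall>e\<in>E. ham_ok (H e))
   \<and> (\<forall>x\<in>vertices E src tgt. \<forall>y\<in>vertices E src tgt.
        (x, y) \<in> {(src e, tgt e) | e. e \<in> E}\<^sup>*)"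

definition a_arc :: "(real \<Rightarrow> real \<Rightarrow> real) \<Rightarrow> real" where
  "a_arc h = (SUP s\<in>{0..1}. INF p. h s p)"

definition visc_subsol :: "(real \<Rightarrow> real \<Rightarrow> real) \<Rightarrow> real \<Rightarrow> (real \<Rightarrow> real) \<Rightarrow> bool" where
  "visc_subsol h a u \<longleftrightarrow>
     (\<forall>s\<in>{0<..<1}. \<forall>\<phi> \<phi>'.
        (\<forall>x\<in>{0<..<1}. (\<phi> has_real_derivative \<phi>' x) (at x))
      \<and> continuous_on {0<..<1} \<phi>'
      \<and> (\<exists>\<delta>>0. \<forall>y\<in>{0<..<1}. \<bar>y - s\<bar> < \<delta> \<longrightarrow> u y - \<phi> y \<le> u s - \<phi> s)
      \<longrightarrow> h s (\<phi>' s) \<le> a)"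

definition c_arc :: "(real \<Rightarrow> real \<Rightarrow> real) \<Rightarrow> real" where
  "c_arc h = Inf {a. \<exists>u. continuous_on {0..1} u \<and> u 0 = u 1 \<and> visc_subsol h a u}"

definition a_zero ::
  "'e set \<Rightarrow> ('e \<Rightarrow> 'v) \<Rightarrow> ('e \<Rightarrow> 'v) \<Rightarrow> ('e \<Rightarrow> real \<Rightarrow> real \<Rightarrow> real) \<Rightarrow> real" where
  "a_zero E src tgt H =
     Max ((\<lambda>e. a_arc (H e)) ` {e \<in> E. src e \<noteq> tgt e}
        \<union> (\<lambda>e. c_arc (H e)) ` {e \<in> E. src e = tgt e})"

definition sigma :: "('e \<Rightarrow> real \<Rightarrow> real \<Rightarrow> real) \<Rightarrow> real \<Rightarrow> 'e \<Rightarrow> real" where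
  "sigma H a e = integral {0..1} (\<lambda>t. Sup {p. H e t p = a})"

definition DFE_subsol ::
  "'e set \<Rightarrow> ('e \<Rightarrow> 'v) \<Rightarrow> ('e \<Rightarrow> 'v) \<Rightarrow> ('e \<Rightarrow> real \<Rightarrow> real \<Rightarrow> real) \<Rightarrow> real \<Rightarrow> ('v \<Rightarrow> real) \<Rightarrow> bool" where
  "DFE_subsol E src tgt H a u \<longleftrightarrow>
     (\<forall>e\<in>E. u (tgt e) - u (src e) \<le> sigma H a e)"

definition crit_value ::
  "'e set \<Rightarrow> ('e \<Rightarrow> 'v) \<Rightarrow> ('e \<Rightarrow> 'v) \<Rightarrow> ('e \<Rightarrow> real \<Rightarrow> real \<Rightarrow> real) \<Rightarrow> real" where
  "crit_value E src tgt H =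
     Inf {a. a \<ge> a_zero E src tgt H \<and> (\<exists>u. DFE_subsol E src tgt H a u)}"

end

theory Submission
  imports Defs
begin

text \<open>Write w_a(e) = \<sigma>_a(-e). A function u is a subsolution of (DFE_a) iff
  u(src e) \<le> w_a(e) + u(tgt e) for all edges, which happens iff every closed walk has nonnegative
  w_a-weight. Since a \<mapsto> \<sigma>_a(e) is continuous from the right, closed walks are still
  nonnegative at the critical value c. If moreover some nonempty closed walk through z has
  w_c-weight zero, the least w_c-weight of walks from x to z solves (DFE_c). Such a walk exists:
  for c > a_0, \<sigma>_a is also continuous from the left, and since only the finitely many short
  closed walks matter, positivity of all of them would survive slightly below c. For c = a_0 look
  at an arc realising a_0. If its Hamiltonian is flat, the level set of the minimum is a single
  point and \<sigma>_c(e) + \<sigma>_c(-e) = 0. Otherwise it is a loop with c_\<gamma> = a_0, and one of its two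
  orientations has weight zero: two positive weights would still be positive slightly below a_0,
  and a suitable convex combination of the two level maxima would then be the derivative of a
  periodic subsolution below c_\<gamma>.\<close>

lemma approx_from_above:
  fixes b :: real
  obtains a :: "nat \<Rightarrow> real" where "a \<longlonglongrightarrow> b" "\<And>k. b < a k"
proof (rule that)
  show "(\<lambda>k. b + 1 / (real k + 1)) \<longlonglongrightarrow> b"
    using tendsto_add[OF tendsto_const LIMSEQ_inverse_real_of_nat] by (simp add: divide_inverse add.commute)
qed simp

lemma approx_from_below:
  fixes b c :: real
  assumes "c < b"
  obtains a :: "nat \<Rightarrow> real" where "a \<longlonglongrightarrow> b" "\<And>k. c < a k" "\<And>k. a k < b"
proof (rule that)
  define d where "d = (b - c) / 2"
  have d: "0 < d" "d < b - c" using assms by (simp_all add: d_def)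
  have "(\<lambda>k. d / (real k + 1)) \<longlonglongrightarrow> 0"
    using tendsto_mult[OF tendsto_const[of d] LIMSEQ_inverse_real_of_nat]
    by (simp add: divide_inverse add.commute)
  then show "(\<lambda>k. b - d / (real k + 1)) \<longlonglongrightarrow> b"
    using tendsto_diff[OF tendsto_const[of b]] by fastforce
  have le_d: "d / (real k + 1) \<le> d" for k
    using mult_left_mono[of 1 "real k + 1" d] d(1) by (simp add: divide_le_eq)
  show "c < b - d / (real k + 1)" for k using le_d[of k] d(2) by linarith
  show "b - d / (real k + 1) < b" for k using d by simp
qed

section \<open>Hamiltonians on an arc\<close>

lemma ham_ok_continuous_on_p:
  assumes "ham_ok h" "s \<in> {0..1}"
  shows "continuous_on UNIV (h s)"
proof -
  have "continuous_on ({0..1} \<times> UNIV) (\<lambda>(s,p). h s p)"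
    using assms(1) unfolding ham_ok_def by blast
  then have "continuous_on UNIV (\<lambda>p. (\<lambda>(s,p). h s p) (s,p))"
    by (rule continuous_on_compose2) (use assms(2) in \<open>auto intro!: continuous_intros\<close>)
  then show ?thesis by simp
qed

lemma ham_ok_continuous_on_s:
  assumes "ham_ok h"
  shows "continuous_on {0..1} (\<lambda>s. h s p)"
proof -
  have "continuous_on ({0..1} \<times> UNIV) (\<lambda>(s,p). h s p)"
    using assms unfolding ham_ok_def by blast
  then have "continuous_on {0..1} (\<lambda>s. (\<lambda>(s,p). h s p) (s,p))"
    by (rule continuous_on_compose2) (auto intro!: continuous_intros)
  then show ?thesis by simp
qed

lemma ham_ok_coercive:
  assumes "ham_ok h"
  obtains R where "\<And>s p. s \<in> {0..1} \<Longrightarrow> R \<le> \<bar>p\<bar> \<Longrightarrow> M \<le> h s p"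
  using assms unfolding ham_ok_def by blast

lemma ham_ok_bounded_on_strip:
  assumes "ham_ok h"
  obtains B where "\<And>s p. s \<in> {0..1} \<Longrightarrow> \<bar>p\<bar> \<le> r \<Longrightarrow> \<bar>h s p\<bar> \<le> B"
proof -
  let ?K = "{0..1::real} \<times> {-r..r}"
  have "continuous_on ({0..1} \<times> UNIV) (\<lambda>(s,p). h s p)"
    using assms unfolding ham_ok_def by blast
  then have "continuous_on ?K (\<lambda>(s,p). h s p)"
    by (rule continuous_on_subset) auto
  then have "compact ((\<lambda>(s,p). h s p) ` ?K)"
    by (intro compact_continuous_image compact_Times) auto
  then obtain B where "\<forall>x\<in>(\<lambda>(s,p). h s p) ` ?K. \<bar>x\<bar> \<le> B"
    using compact_imp_bounded bounded_real by blast
  then show ?thesis using that by force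
qed

lemma ham_ok_bounded_below:
  assumes "ham_ok h"
  obtains L where "\<And>s p. s \<in> {0..1} \<Longrightarrow> L \<le> h s p"
proof -
  obtain R where R: "\<And>s p. s \<in> {0..1} \<Longrightarrow> R \<le> \<bar>p\<bar> \<Longrightarrow> 0 \<le> h s p"
    using ham_ok_coercive[OF assms] by blast
  obtain B where B: "\<And>s p. s \<in> {0..1} \<Longrightarrow> \<bar>p\<bar> \<le> R \<Longrightarrow> \<bar>h s p\<bar> \<le> B"
    using ham_ok_bounded_on_strip[OF assms] by blast
  have "min 0 (- B) \<le> h s p" if "s \<in> {0..1}" for s p
    using R[OF that, of p] B[OF that, of p] by (cases "R \<le> \<bar>p\<bar>") auto
  then show ?thesis using that by blast
qed

lemma ham_ok_attains_min:
  assumes "ham_ok h" "s \<in> {0..1}"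
  obtains p0 where "\<And>p. h s p0 \<le> h s p"
proof -
  obtain R where R: "\<And>s' p. s' \<in> {0..1} \<Longrightarrow> R \<le> \<bar>p\<bar> \<Longrightarrow> h s 0 + 1 \<le> h s' p"
    using ham_ok_coercive[OF assms(1)] by blast
  have "continuous_on {-\<bar>R\<bar>..\<bar>R\<bar>} (h s)"
    using ham_ok_continuous_on_p[OF assms] continuous_on_subset by blast
  then obtain p0 where p0: "p0 \<in> {-\<bar>R\<bar>..\<bar>R\<bar>}" "\<And>y. y \<in> {-\<bar>R\<bar>..\<bar>R\<bar>} \<Longrightarrow> h s p0 \<le> h s y"
    using continuous_attains_inf[of "{-\<bar>R\<bar>..\<bar>R\<bar>}" "h s"] by auto
  have "h s p0 \<le> h s p" for p
  proof (cases "\<bar>p\<bar> \<le> \<bar>R\<bar>")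
    case True
    then show ?thesis using p0(2) by (auto simp: abs_le_iff)
  next
    case False
    then have "h s 0 + 1 \<le> h s p" using R assms(2) by auto
    moreover have "h s p0 \<le> h s 0" using p0(2) by auto
    ultimately show ?thesis by simp
  qed
  then show ?thesis using that by blast
qed

lemma ham_ok_Inf_le:
  assumes "ham_ok h" "s \<in> {0..1}"
  shows "(INF p. h s p) \<le> h s p"
proof -
  obtain L where "\<And>s p. s \<in> {0..1} \<Longrightarrow> L \<le> h s p"
    using ham_ok_bounded_below[OF assms(1)] by blast
  then have "bdd_below (range (h s))" using assms(2) by (intro bdd_belowI[of _ L]) auto
  then show ?thesis by (rule cINF_lower) simp
qed

lemma ham_ok_sublevel_nonempty_iff:
  assumes "ham_ok h" "s \<in> {0..1}"
  shows "(\<exists>p. h s p \<le> b) \<longleftrightarrow> (INF p. h s p) \<le> b"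
proof
  assume "\<exists>p. h s p \<le> b"
  then show "(INF p. h s p) \<le> b" using ham_ok_Inf_le[OF assms] by (meson order_trans)
next
  assume b: "(INF p. h s p) \<le> b"
  obtain p0 where "\<And>p. h s p0 \<le> h s p" using ham_ok_attains_min[OF assms] by blast
  then have "h s p0 \<le> (INF p. h s p)" by (intro cINF_greatest) auto
  then show "\<exists>p. h s p \<le> b" using b by (intro exI[of _ p0]) simp
qed

lemma ham_ok_sublevel_interval:
  assumes "ham_ok h" "s \<in> {0..1}" "h s x \<le> b" "h s y \<le> b" "x \<le> z" "z \<le> y"
  shows "h s z \<le> b"
proof -
  have "convex {p. h s p \<le> b}" using assms(1,2) unfolding ham_ok_def by blast
  then have "is_interval {p. h s p \<le> b}" by (simp add: is_interval_convex_1)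
  then show ?thesis using assms(3-6) unfolding is_interval_1 by blast
qed

lemma a_arc_le_iff:
  assumes "ham_ok h"
  shows "a_arc h \<le> b \<longleftrightarrow> (\<forall>t\<in>{0..1}. \<exists>p. h t p \<le> b)"
proof -
  obtain B where B: "\<And>s p. s \<in> {0..1} \<Longrightarrow> \<bar>p\<bar> \<le> 0 \<Longrightarrow> \<bar>h s p\<bar> \<le> B"
    using ham_ok_bounded_on_strip[OF assms] by blast
  have "(INF p. h s p) \<le> B" if "s \<in> {0..1}" for s
    using ham_ok_Inf_le[OF assms that, of 0] B[OF that, of 0] by simp
  then have "bdd_above ((\<lambda>s. INF p. h s p) ` {0..1})" by (rule bdd_aboveI2)
  then have "a_arc h \<le> b \<longleftrightarrow> (\<forall>t\<in>{0..1}. (INF p. h t p) \<le> b)"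
    unfolding a_arc_def by (simp add: cSUP_le_iff)
  then show ?thesis using ham_ok_sublevel_nonempty_iff[OF assms] by simp
qed

lemma a_arc_less_imp_strict_sublevel:
  assumes "ham_ok h" "a_arc h < b" "t \<in> {0..1}"
  obtains p where "h t p < b"
proof -
  have "a_arc h \<le> (a_arc h + b) / 2" using assms(2) by simp
  then obtain p where "h t p \<le> (a_arc h + b) / 2"
    using a_arc_le_iff[OF assms(1)] assms(3) by blast
  moreover have "(a_arc h + b) / 2 < b" using assms(2) by simp
  ultimately show ?thesis using that by (meson le_less_trans)
qed

lemma a_arc_reflect:
  assumes "\<And>s p. h' s p = h (1 - s) (- p)"
  shows "a_arc h' = a_arc h"
proof -
  have "range (h' s) = range (\<lambda>p. h (1 - s) (- p))" for s using assms by simp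
  also have "\<dots> s = range (h (1 - s))" for s
    by (auto intro: image_eqI[where x = "- _"])
  finally have "a_arc h' = (SUP s\<in>(\<lambda>s. 1 - s) ` {0..1}. INF p. h s p)"
    unfolding a_arc_def by (simp only: image_image)
  moreover have "(\<lambda>s::real. 1 - s) ` {0..1} = {0..1}"
    by (auto intro: image_eqI[where x = "1 - _"])
  ultimately show ?thesis unfolding a_arc_def by simp
qed

section \<open>Largest points of level sets\<close>

definition level_max :: "(real \<Rightarrow> real \<Rightarrow> real) \<Rightarrow> real \<Rightarrow> real \<Rightarrow> real" where
  "level_max h t b = Sup {p. h t p = b}"

lemma sigma_eq_integral_level_max: "sigma H a e = integral {0..1} (\<lambda>t. level_max (H e) t a)"
  by (simp add: sigma_def level_max_def)

lemma level_max_greatest: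
  assumes "ham_ok h" "t \<in> {0..1}" "\<exists>p. h t p \<le> b"
  shows "h t (level_max h t b) = b \<and> (\<forall>p. h t p \<le> b \<longrightarrow> p \<le> level_max h t b)"
proof -
  let ?L = "{p. h t p \<le> b}"
  have cont: "continuous_on UNIV (h t)" by (rule ham_ok_continuous_on_p[OF assms(1,2)])
  obtain R where R: "\<And>s p. s \<in> {0..1} \<Longrightarrow> R \<le> \<bar>p\<bar> \<Longrightarrow> b + 1 \<le> h s p"
    using ham_ok_coercive[OF assms(1)] by blast
  have "p \<le> \<bar>R\<bar>" if "p \<in> ?L" for p
    using that R[OF assms(2), of p] by (cases "R \<le> \<bar>p\<bar>") auto
  then have bdd: "bdd_above ?L" by (rule bdd_aboveI)
  have "closed ?L" using cont by (intro closed_Collect_le) (auto intro: continuous_on_subset)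
  then have qL: "Sup ?L \<in> ?L" using assms(3) bdd by (intro closed_contains_Sup) auto
  have ub: "p \<le> Sup ?L" if "h t p \<le> b" for p
    using that bdd by (auto intro: cSup_upper)
  have root: "h t (Sup ?L) = b"
  proof (rule ccontr)
    assume "h t (Sup ?L) \<noteq> b"
    then have lt: "h t (Sup ?L) < b" using qL by auto
    have "isCont (h t) (Sup ?L)" using cont by (simp add: continuous_on_eq_continuous_at)
    then obtain d where d: "d > 0"
        "\<And>p. dist p (Sup ?L) < d \<Longrightarrow> dist (h t p) (h t (Sup ?L)) < b - h t (Sup ?L)"
      using lt unfolding continuous_at_eps_delta by (metis diff_gt_0_iff_gt)
    have "dist (Sup ?L + d/2) (Sup ?L) < d" using d(1) by (simp add: dist_real_def)
    then have "dist (h t (Sup ?L + d/2)) (h t (Sup ?L)) < b - h t (Sup ?L)" by (rule d(2))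
    then have "h t (Sup ?L + d/2) < b" by (simp add: dist_real_def abs_less_iff)
    then show False using ub[of "Sup ?L + d/2"] d(1) by simp
  qed
  have "level_max h t b = Sup ?L"
    unfolding level_max_def by (rule cSup_eq_maximum) (use root ub in auto)
  then show ?thesis using root ub by simp
qed

lemma level_max_root:
  "ham_ok h \<Longrightarrow> t \<in> {0..1} \<Longrightarrow> \<exists>p. h t p \<le> b \<Longrightarrow> h t (level_max h t b) = b"
  using level_max_greatest by blast

lemma le_level_max:
  "ham_ok h \<Longrightarrow> t \<in> {0..1} \<Longrightarrow> h t p \<le> b \<Longrightarrow> p \<le> level_max h t b"
  using level_max_greatest by blast

lemma level_max_mono:
  assumes "ham_ok h" "t \<in> {0..1}" "\<exists>p. h t p \<le> b1" "b1 \<le> b2"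
  shows "level_max h t b1 \<le> level_max h t b2"
  using level_max_root[OF assms(1-3)] assms(4) by (intro le_level_max[OF assms(1,2)]) simp

text \<open>Since the interior of a sublevel set is the strict sublevel set, the largest point of
  level b is a limit of points of strictly lower level.\<close>
lemma level_max_approx_strict:
  assumes "ham_ok h" "t \<in> {0..1}" "\<exists>p. h t p < b" "e > 0"
  obtains r where "h t r < b" "level_max h t b - e < r"
proof -
  let ?L = "{p. h t p \<le> b}"
  have cv: "convex ?L" and int: "interior ?L = {p. h t p < b}"
    using assms(1,2) unfolding ham_ok_def by blast+
  have "interior ?L \<noteq> {}" using int assms(3) by auto
  then have "closure (interior ?L) = closure ?L" by (rule convex_closure_interior[OF cv])
  moreover have "level_max h t b \<in> closure ?L"
  proof -
    have "\<exists>p. h t p \<le> b" using assms(3) less_imp_le by blast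
    then have "level_max h t b \<in> ?L" using level_max_root[OF assms(1,2)] by simp
    then show ?thesis by (rule subsetD[OF closure_subset])
  qed
  ultimately have "level_max h t b \<in> closure {p. h t p < b}" using int by simp
  then obtain r where "h t r < b" "dist r (level_max h t b) < e"
    using assms(4) unfolding closure_approachable by blast
  then show ?thesis by (intro that) (auto simp: dist_real_def abs_less_iff)
qed

lemma tendsto_level_max_right:
  assumes "ham_ok h" "t \<in> {0..1}" "\<exists>p. h t p \<le> b" "\<And>k. b \<le> a k" "a \<longlonglongrightarrow> b"
  shows "(\<lambda>k. level_max h t (a k)) \<longlonglongrightarrow> level_max h t b"
proof (rule LIMSEQ_I)
  fix e :: real assume e: "e > 0"
  let ?P = "level_max h t b" let ?q = "level_max h t b + e/2"
  have hP: "h t ?P = b" by (rule level_max_root[OF assms(1-3)])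
  have "b < h t ?q"
    using le_level_max[OF assms(1,2), of ?q b] e by (cases "h t ?q \<le> b") auto
  then have "\<forall>\<^sub>F k in sequentially. a k < h t ?q" by (rule order_tendstoD(2)[OF assms(5)])
  then obtain N where N: "\<And>k. k \<ge> N \<Longrightarrow> a k < h t ?q" unfolding eventually_sequentially by blast
  have "norm (level_max h t (a k) - ?P) < e" if k: "k \<ge> N" for k
  proof -
    have ak: "\<exists>p. h t p \<le> a k" using assms(3,4) order_trans by blast
    have lo: "?P \<le> level_max h t (a k)" by (rule level_max_mono[OF assms(1-3) assms(4)])
    have "level_max h t (a k) < ?q"
    proof (rule ccontr)
      assume "\<not> level_max h t (a k) < ?q"
      then have "h t ?q \<le> a k"
        using ham_ok_sublevel_interval[OF assms(1,2), of ?P "a k" "level_max h t (a k)" ?q]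
          hP assms(4)[of k] level_max_root[OF assms(1,2) ak] e by simp
      then show False using N[OF k] by simp
    qed
    then show ?thesis using lo e by simp
  qed
  then show "\<exists>N. \<forall>k\<ge>N. norm (level_max h t (a k) - ?P) < e" by blast
qed

lemma tendsto_level_max_left:
  assumes "ham_ok h" "t \<in> {0..1}" "\<exists>p. h t p < b" "\<And>k. a k \<le> b" "\<And>k. \<exists>p. h t p \<le> a k"
    "a \<longlonglongrightarrow> b"
  shows "(\<lambda>k. level_max h t (a k)) \<longlonglongrightarrow> level_max h t b"
proof (rule LIMSEQ_I)
  fix e :: real assume e: "e > 0"
  obtain r where r: "h t r < b" "level_max h t b - e < r"
    using level_max_approx_strict[OF assms(1-3) e] .
  have "\<forall>\<^sub>F k in sequentially. h t r < a k" using assms(6) r(1) by (rule order_tendstoD(1))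
  then obtain N where N: "\<And>k. k \<ge> N \<Longrightarrow> h t r < a k" unfolding eventually_sequentially by blast
  have "norm (level_max h t (a k) - level_max h t b) < e" if k: "k \<ge> N" for k
  proof -
    have "level_max h t (a k) \<le> level_max h t b"
      by (rule level_max_mono[OF assms(1,2) assms(5) assms(4)])
    moreover have "r \<le> level_max h t (a k)"
      using N[OF k] by (intro le_level_max[OF assms(1,2)]) simp
    ultimately show ?thesis using r by simp
  qed
  then show "\<exists>N. \<forall>k\<ge>N. norm (level_max h t (a k) - level_max h t b) < e" by blast
qed

text \<open>Continuity in t: a point r of strictly lower level and a point q above the level maximum
  stay below, resp. above, level b for nearby t, trapping the level maximum between them.\<close>
lemma continuous_on_level_max:
  assumes "ham_ok h" "a_arc h < b"
  shows "continuous_on {0..1} (\<lambda>t. level_max h t b)"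
  unfolding continuous_on_iff
proof (intro ballI allI impI)
  fix t0 e :: real assume t0: "t0 \<in> {0..1}" and e: "e > 0"
  let ?P = "level_max h t0 b" let ?q = "?P + e/2"
  obtain r0 where "h t0 r0 < b" using a_arc_less_imp_strict_sublevel[OF assms t0] .
  then have strict0: "\<exists>p. h t0 p < b" and g0: "\<exists>p. h t0 p \<le> b" by (auto intro: less_imp_le)
  obtain r where r: "h t0 r < b" "?P - e < r"
    using level_max_approx_strict[OF assms(1) t0 strict0 e] .
  have rP: "r \<le> ?P" using le_level_max[OF assms(1) t0] r(1) by simp
  have hq: "b < h t0 ?q"
    using le_level_max[OF assms(1) t0, of ?q b] e by (cases "h t0 ?q \<le> b") auto
  obtain d1 where d1: "d1 > 0" "\<forall>t\<in>{0..1}. dist t t0 < d1 \<longrightarrow> dist (h t r) (h t0 r) < b - h t0 r"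
    using ham_ok_continuous_on_s[OF assms(1), of r] t0 r(1)
    unfolding continuous_on_iff by (metis diff_gt_0_iff_gt)
  obtain d2 where d2: "d2 > 0" "\<forall>t\<in>{0..1}. dist t t0 < d2 \<longrightarrow> dist (h t ?q) (h t0 ?q) < h t0 ?q - b"
    using ham_ok_continuous_on_s[OF assms(1), of ?q] t0 hq
    unfolding continuous_on_iff by (metis diff_gt_0_iff_gt)
  have "dist (level_max h t b) ?P < e" if t: "t \<in> {0..1}" and dt: "dist t t0 < min d1 d2" for t
  proof -
    have htr: "h t r < b" using d1(2) t dt unfolding dist_real_def by force
    have htq: "b < h t ?q" using d2(2) t dt unfolding dist_real_def by force
    have gt: "\<exists>p. h t p \<le> b" using htr less_imp_le by blast
    have lo: "r \<le> level_max h t b" using htr by (intro le_level_max[OF assms(1) t]) simp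
    have "level_max h t b < ?q"
    proof (rule ccontr)
      assume "\<not> level_max h t b < ?q"
      moreover have "r \<le> ?q" using rP e by simp
      ultimately have "h t ?q \<le> b"
        using ham_ok_sublevel_interval[OF assms(1) t, of r b "level_max h t b" ?q] htr
          level_max_root[OF assms(1) t gt] by simp
      then show False using htq by simp
    qed
    then show ?thesis unfolding dist_real_def using lo r e rP by linarith
  qed
  then show "\<exists>d>0. \<forall>t\<in>{0..1}. dist t t0 < d \<longrightarrow> dist (level_max h t b) ?P < e"
    using d1(1) d2(1) by (intro exI[of _ "min d1 d2"]) auto
qed

lemma level_max_bounded:
  assumes "ham_ok h"
  obtains R where "\<And>t b. t \<in> {0..1} \<Longrightarrow> b \<le> B \<Longrightarrow> \<exists>p. h t p \<le> b \<Longrightarrow> \<bar>level_max h t b\<bar> \<le> R"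
proof -
  obtain R where R: "\<And>s p. s \<in> {0..1} \<Longrightarrow> R \<le> \<bar>p\<bar> \<Longrightarrow> B + 1 \<le> h s p"
    using ham_ok_coercive[OF assms] by blast
  have "\<bar>level_max h t b\<bar> \<le> R" if "t \<in> {0..1}" "b \<le> B" "\<exists>p. h t p \<le> b" for t b
    using level_max_root[OF assms that(1,3)] R[OF that(1), of "level_max h t b"] that(2)
    by (cases "R \<le> \<bar>level_max h t b\<bar>") auto
  then show ?thesis using that by blast
qed

lemma tendsto_integral_level_max:
  assumes "ham_ok h" "a_arc h \<le> b" "\<And>k. a_arc h \<le> a k" "a \<longlonglongrightarrow> b"
    "\<And>t. t \<in> {0..1} \<Longrightarrow> (\<lambda>k. level_max h t (a k)) \<longlonglongrightarrow> level_max h t b"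
    "\<And>k. (\<lambda>t. level_max h t (a k)) integrable_on {0..1}"
  shows "(\<lambda>t. level_max h t b) integrable_on {0..1}"
    and "(\<lambda>k. integral {0..1} (\<lambda>t. level_max h t (a k))) \<longlonglongrightarrow> integral {0..1} (\<lambda>t. level_max h t b)"
proof -
  obtain B where "\<And>k. a k \<le> B"
    using Bseq_bdd_above[OF convergent_imp_Bseq[OF convergentI[OF assms(4)]]]
    by (auto simp: bdd_above_def)
  moreover obtain R where
    R: "\<And>t b. t \<in> {0..1} \<Longrightarrow> b \<le> B \<Longrightarrow> \<exists>p. h t p \<le> b \<Longrightarrow> \<bar>level_max h t b\<bar> \<le> R"
    using level_max_bounded[OF assms(1)] by blast
  ultimately have bound: "norm (level_max h t (a k)) \<le> R" if "t \<in> {0..1}" for k t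
    using R[OF that] assms(3)[of k] a_arc_le_iff[OF assms(1)] that by auto
  show "(\<lambda>t. level_max h t b) integrable_on {0..1}"
    by (rule dominated_convergence(1)[OF assms(6) integrable_const_ivl bound assms(5)])
  show "(\<lambda>k. integral {0..1} (\<lambda>t. level_max h t (a k))) \<longlonglongrightarrow> integral {0..1} (\<lambda>t. level_max h t b)"
    by (rule dominated_convergence(2)[OF assms(6) integrable_const_ivl bound assms(5)])
qed

lemma integrable_level_max:
  assumes "ham_ok h" "a_arc h \<le> b"
  shows "(\<lambda>t. level_max h t b) integrable_on {0..1}"
proof -
  obtain a where a_lim: "a \<longlonglongrightarrow> b" and a_gt: "\<And>k. b < a k"
    using approx_from_above[of b] by blast
  have conv: "(\<lambda>k. level_max h t (a k)) \<longlonglongrightarrow> level_max h t b" if "t \<in> {0..1}" for t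
    using assms a_arc_le_iff that a_gt less_imp_le by (intro tendsto_level_max_right[OF _ _ _ _ a_lim]) blast+
  have "a_arc h < a k" for k using assms(2) a_gt[of k] by simp
  then have int: "(\<lambda>t. level_max h t (a k)) integrable_on {0..1}" for k
    by (rule integrable_continuous_real[OF continuous_on_level_max[OF assms(1)]])
  show ?thesis
    by (rule tendsto_integral_level_max(1)[OF assms less_imp_le[OF \<open>a_arc h < a _\<close>] a_lim conv int])
qed

lemma tendsto_integral_level_max_right:
  assumes "ham_ok h" "a_arc h \<le> b" "\<And>k. b \<le> a k" "a \<longlonglongrightarrow> b"
  shows "(\<lambda>k. integral {0..1} (\<lambda>t. level_max h t (a k))) \<longlonglongrightarrow> integral {0..1} (\<lambda>t. level_max h t b)"
proof -
  have ak: "a_arc h \<le> a k" for k using assms(2,3) order_trans by blast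
  have conv: "(\<lambda>k. level_max h t (a k)) \<longlonglongrightarrow> level_max h t b" if "t \<in> {0..1}" for t
    using assms a_arc_le_iff that by (intro tendsto_level_max_right) blast+
  show ?thesis
    by (rule tendsto_integral_level_max(2)[OF assms(1,2) ak assms(4) conv integrable_level_max[OF assms(1) ak]])
qed

lemma tendsto_integral_level_max_left:
  assumes "ham_ok h" "a_arc h < b" "\<And>k. a_arc h \<le> a k" "\<And>k. a k \<le> b" "a \<longlonglongrightarrow> b"
  shows "(\<lambda>k. integral {0..1} (\<lambda>t. level_max h t (a k))) \<longlonglongrightarrow> integral {0..1} (\<lambda>t. level_max h t b)"
proof -
  have conv: "(\<lambda>k. level_max h t (a k)) \<longlonglongrightarrow> level_max h t b" if t: "t \<in> {0..1}" for t
  proof (rule tendsto_level_max_left[OF assms(1) t _ assms(4) _ assms(5)])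
    obtain p where "h t p < b" using a_arc_less_imp_strict_sublevel[OF assms(1,2) t] .
    then show "\<exists>p. h t p < b" ..
    show "\<exists>p. h t p \<le> a k" for k using assms(3) a_arc_le_iff[OF assms(1)] t by blast
  qed
  show ?thesis
    by (rule tendsto_integral_level_max(2)[OF assms(1) less_imp_le[OF assms(2)] assms(3,5) conv
          integrable_level_max[OF assms(1,3)]])
qed

lemma integral_level_max_mono:
  assumes "ham_ok h" "a_arc h \<le> a" "a \<le> b"
  shows "integral {0..1} (\<lambda>t. level_max h t a) \<le> integral {0..1} (\<lambda>t. level_max h t b)"
proof -
  have "a_arc h \<le> b" using assms(2,3) by simp
  show ?thesis
  proof (rule integral_le[OF integrable_level_max[OF assms(1,2)] integrable_level_max[OF assms(1) \<open>a_arc h \<le> b\<close>]])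
    fix t :: real assume t: "t \<in> {0..1}"
    then have "\<exists>p. h t p \<le> a" using assms(2) unfolding a_arc_le_iff[OF assms(1)] by blast
    then show "level_max h t a \<le> level_max h t b" by (rule level_max_mono[OF assms(1) t _ assms(3)])
  qed
qed

lemma integral_level_max_nonneg:
  assumes "ham_ok h" "\<And>t. t \<in> {0..1} \<Longrightarrow> h t 0 \<le> b"
  shows "0 \<le> integral {0..1} (\<lambda>t. level_max h t b)"
proof -
  have "a_arc h \<le> b" unfolding a_arc_le_iff[OF assms(1)] using assms(2) by blast
  then show ?thesis
  proof (rule integral_nonneg[OF integrable_level_max[OF assms(1)]])
    fix t :: real assume t: "t \<in> {0..1}"
    show "0 \<le> level_max h t b" by (rule le_level_max[OF assms(1) t assms(2)[OF t]])
  qed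
qed

lemma integral_reflect01:
  fixes f :: "real \<Rightarrow> real"
  assumes "f integrable_on {0..1}"
  shows "integral {0..1} (\<lambda>t. f (1 - t)) = integral {0..1} f"
proof -
  have "(f has_integral integral {0..1} f) (cbox 0 1)" using assms by (simp add: has_integral_integral)
  from has_integral_affinity[OF this, of "-1" 1]
  have "((\<lambda>x. f (1 - x)) has_integral integral {0..1} f) ((\<lambda>x. - x + 1) ` cbox 0 1)" by simp
  moreover have "(\<lambda>x::real. - x + 1) ` cbox 0 1 = {0..1}"
    by (auto intro: image_eqI[where x = "1 - _"])
  ultimately show ?thesis by (simp add: integral_unique)
qed

text \<open>For a flat Hamiltonian the sublevel set of the minimum has empty interior, so it is a
  single point and the reflected Hamiltonian has the negated level maximum.\<close>
lemma level_max_reflect_flat: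
  assumes h: "ham_ok h" and h': "ham_ok h'" and reflect: "\<And>s p. h' s p = h (1 - s) (- p)"
    and t: "t \<in> {0..1}" and flat: "(INF p. h (1 - t) p) = b"
  shows "level_max h' t b = - level_max h (1 - t) b"
proof (rule ccontr)
  assume ne: "level_max h' t b \<noteq> - level_max h (1 - t) b"
  have t': "1 - t \<in> {0..1}" using t by auto
  have g: "\<exists>p. h (1 - t) p \<le> b" using ham_ok_sublevel_nonempty_iff[OF h t'] flat by simp
  then have g': "\<exists>p. h' t p \<le> b" using reflect by (metis minus_minus)
  let ?x = "level_max h (1 - t) b" let ?y = "- level_max h' t b"
  have hx: "h (1 - t) ?x = b" by (rule level_max_root[OF h t' g])
  have hy: "h (1 - t) ?y = b"
    using level_max_root[OF h' t g'] reflect[of t "level_max h' t b"] by simp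
  define lo where "lo = min ?x ?y"
  define hi where "hi = max ?x ?y"
  have "{lo<..<hi} \<subseteq> {p. h (1 - t) p \<le> b}"
  proof
    fix z assume "z \<in> {lo<..<hi}"
    moreover have "h (1 - t) lo \<le> b" "h (1 - t) hi \<le> b"
      using hx hy unfolding lo_def hi_def by (auto simp: min_def max_def)
    ultimately show "z \<in> {p. h (1 - t) p \<le> b}"
      using ham_ok_sublevel_interval[OF h t', of lo b hi z] by auto
  qed
  then have "{lo<..<hi} \<subseteq> interior {p. h (1 - t) p \<le> b}" by (intro interior_maximal) auto
  also have "\<dots> = {p. h (1 - t) p < b}" using h t' unfolding ham_ok_def by blast
  also have "\<dots> = {}" using ham_ok_Inf_le[OF h t'] flat by (auto simp: not_less)
  finally have "{lo<..<hi} = {}" by blast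
  moreover have "lo < hi" using ne unfolding lo_def hi_def by auto
  ultimately show False by simp
qed

lemma integral_level_max_reflect_flat:
  assumes h: "ham_ok h" and h': "ham_ok h'" and reflect: "\<And>s p. h' s p = h (1 - s) (- p)"
    and flat: "\<And>t. t \<in> {0..1} \<Longrightarrow> (INF p. h t p) = b"
  shows "integral {0..1} (\<lambda>t. level_max h' t b) = - integral {0..1} (\<lambda>t. level_max h t b)"
proof -
  have "a_arc h \<le> b" unfolding a_arc_def using flat by (simp add: cSUP_le_iff)
  then have int: "(\<lambda>t. level_max h t b) integrable_on {0..1}" by (rule integrable_level_max[OF h])
  have "integral {0..1} (\<lambda>t. level_max h' t b) = integral {0..1} (\<lambda>t. - level_max h (1 - t) b)"
    using level_max_reflect_flat[OF h h' reflect] flat by (intro integral_cong) simp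
  also have "\<dots> = - integral {0..1} (\<lambda>t. level_max h t b)"
    using integral_reflect01[OF int] by simp
  finally show ?thesis .
qed

section \<open>Viscosity subsolutions on an arc\<close>

lemma touching_test_function_deriv_eq:
  fixes u \<phi> :: "real \<Rightarrow> real"
  assumes "s \<in> {0<..<1}" "(u has_real_derivative q) (at s)" "(\<phi> has_real_derivative d) (at s)"
    "\<delta> > 0" "\<forall>y\<in>{0<..<1}. \<bar>y - s\<bar> < \<delta> \<longrightarrow> u y - \<phi> y \<le> u s - \<phi> s"
  shows "d = q"
proof -
  have der: "((\<lambda>y. u y - \<phi> y) has_real_derivative q - d) (at s)"
    by (rule DERIV_diff[OF assms(2,3)])
  let ?d = "min \<delta> (min s (1 - s))"
  have "?d > 0" using assms(1,4) by auto
  moreover have "\<forall>y. \<bar>s - y\<bar> < ?d \<longrightarrow> u y - \<phi> y \<le> u s - \<phi> s"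
    using assms(5) by (auto simp: abs_less_iff)
  ultimately have "q - d = 0" by (rule DERIV_local_max[OF der])
  then show ?thesis by simp
qed

lemma visc_subsol_zero:
  assumes "\<And>s. s \<in> {0..1} \<Longrightarrow> h s 0 \<le> a"
  shows "visc_subsol h a (\<lambda>_. 0)"
  unfolding visc_subsol_def
proof (intro ballI allI impI)
  fix s \<phi> \<phi>' assume s: "s \<in> {0<..<1::real}"
    and H: "(\<forall>x\<in>{0<..<1}. (\<phi> has_real_derivative \<phi>' x) (at x)) \<and> continuous_on {0<..<1} \<phi>' \<and>
       (\<exists>\<delta>>0. \<forall>y\<in>{0<..<1}. \<bar>y - s\<bar> < \<delta> \<longrightarrow> 0 - \<phi> y \<le> 0 - \<phi> s)"
  then obtain \<delta> where d: "\<delta> > 0" "\<forall>y\<in>{0<..<1}. \<bar>y - s\<bar> < \<delta> \<longrightarrow> (\<lambda>_. 0) y - \<phi> y \<le> (\<lambda>_. 0) s - \<phi> s"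
    by auto
  have "\<phi>' s = 0" by (rule touching_test_function_deriv_eq[OF s _ _ d]) (use H s in auto)
  then show "h s (\<phi>' s) \<le> a" using assms s by auto
qed

text \<open>Subtracting a parabola steep enough to beat the oscillation of u forces the maximum
  point close to the vertex.\<close>
lemma max_minus_steep_parabola_near:
  fixes u :: "real \<Rightarrow> real"
  assumes "continuous_on {0..1} u" "s0 \<in> {0..1}" "r > 0"
  obtains M t where "t \<in> {0..1}" "\<bar>t - s0\<bar> < r"
    "\<And>y. y \<in> {0..1} \<Longrightarrow> u y - M * (y - s0)^2 \<le> u t - M * (t - s0)^2"
proof -
  have "compact (u ` {0..1})" by (intro compact_continuous_image assms(1) compact_Icc)
  then obtain B where "\<forall>x\<in>u ` {0..1}. \<bar>x\<bar> \<le> B" using compact_imp_bounded bounded_real by blast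
  then have B: "\<bar>u y\<bar> \<le> B" if "y \<in> {0..1}" for y using that by auto
  define M where "M = (2*B+1) / r^2"
  have Mr: "M * r^2 = 2*B+1" using assms(3) by (simp add: M_def)
  have Mpos: "M \<ge> 0" using B[of 0] assms(3) by (simp add: M_def)
  define f where "f y = u y - M * (y - s0)^2" for y
  have "continuous_on {0..1} f" unfolding f_def by (intro continuous_intros assms(1))
  then obtain t where t: "t \<in> {0..1}" "\<forall>y\<in>{0..1}. f y \<le> f t"
    using continuous_attains_sup[of "{0..1}" f] by auto
  have "\<bar>t - s0\<bar> < r"
  proof (rule ccontr)
    assume "\<not> \<bar>t - s0\<bar> < r"
    then have "r^2 \<le> (t - s0)^2" using assms(3) by (simp add: abs_le_square_iff[symmetric])
    then have "M * r^2 \<le> M * (t - s0)^2" by (rule mult_left_mono[OF _ Mpos])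
    then have "f t \<le> B - (2*B+1)" using B[OF t(1)] Mr unfolding f_def by linarith
    moreover have "f s0 \<le> f t" "\<bar>u s0\<bar> \<le> B" using t(2) B assms(2) by auto
    moreover have "f s0 = u s0" by (simp add: f_def)
    ultimately show False by linarith
  qed
  then show ?thesis using that t unfolding f_def by blast
qed

lemma visc_subsol_sublevel_nearby:
  assumes "visc_subsol h a u" "continuous_on {0..1} u" "t0 \<in> {0..1}" "e > 0"
  shows "\<exists>t\<in>{0<..<1}. \<bar>t - t0\<bar> < e \<and> (\<exists>p. h t p \<le> a)"
proof -
  define r where "r = min (e/2) (1/4)"
  have r: "r > 0" "r \<le> e/2" "r \<le> 1/4" using assms(4) by (auto simp: r_def)
  define s0 where "s0 = max r (min (1 - r) t0)"
  have s0: "r \<le> s0" "s0 \<le> 1 - r" "\<bar>s0 - t0\<bar> \<le> r" using r assms(3) by (auto simp: s0_def)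
  then have "s0 \<in> {0..1}" using r by auto
  then obtain M t where t: "t \<in> {0..1}" "\<bar>t - s0\<bar> < r"
    and max: "\<And>y. y \<in> {0..1} \<Longrightarrow> u y - M * (y - s0)^2 \<le> u t - M * (t - s0)^2"
    using max_minus_steep_parabola_near[OF assms(2) _ r(1)] by blast
  have tin: "t \<in> {0<..<1}" using t(2) s0 by (auto simp: abs_less_iff)
  have "h t (2 * M * (t - s0)) \<le> a"
  proof (rule assms(1)[unfolded visc_subsol_def, rule_format, OF tin, of "\<lambda>y. M * (y - s0)^2"],
      intro conjI exI[of _ 1])
    show "\<forall>x\<in>{0<..<1}. ((\<lambda>y. M * (y - s0)^2) has_real_derivative 2 * M * (x - s0)) (at x)"
      by (auto intro!: derivative_eq_intros)
    show "continuous_on {0<..<1} (\<lambda>y. 2 * M * (y - s0))" by (intro continuous_intros)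
    show "\<forall>y\<in>{0<..<1}. \<bar>y - t\<bar> < 1 \<longrightarrow> u y - M * (y - s0)^2 \<le> u t - M * (t - s0)^2"
      using max by auto
  qed simp
  moreover have "\<bar>t - t0\<bar> < e" using t(2) s0 r by linarith
  ultimately show ?thesis using tin by blast
qed

text \<open>The set of t admitting a point of level at most a is closed (by coercivity it is the
  projection of a compact set) and, by the previous lemma, dense in [0,1].\<close>
lemma visc_subsol_imp_a_arc_le:
  assumes "ham_ok h" "visc_subsol h a u" "continuous_on {0..1} u"
  shows "a_arc h \<le> a"
  unfolding a_arc_le_iff[OF assms(1)]
proof
  fix t0 :: real assume t0: "t0 \<in> {0..1}"
  obtain R where R: "\<And>s p. s \<in> {0..1} \<Longrightarrow> R \<le> \<bar>p\<bar> \<Longrightarrow> a + 1 \<le> h s p"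
    using ham_ok_coercive[OF assms(1)] by blast
  have c: "continuous_on ({0..1} \<times> UNIV) (\<lambda>(s,p). h s p)" using assms(1) unfolding ham_ok_def by blast
  let ?Z = "({0..1} \<times> {-\<bar>R\<bar>..\<bar>R\<bar>}) \<inter> (({0..1} \<times> UNIV) \<inter> (\<lambda>(s,p). h s p) -` {..a})"
  have "closed (({0..1::real} \<times> (UNIV::real set)) \<inter> (\<lambda>(s,p). h s p) -` {..a})"
    by (rule continuous_closed_preimage[OF c]) (auto intro: closed_Times)
  then have "compact ?Z" by (intro compact_Int_closed compact_Times) auto
  then have "compact (fst ` ?Z)" by (rule compact_continuous_image[rotated]) (intro continuous_intros)
  then have cl: "closed (fst ` ?Z)" by (rule compact_imp_closed)
  have "t0 \<in> fst ` ?Z"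
  proof (rule closed_approachable[OF cl, THEN iffD1], intro allI impI)
    fix e :: real assume e: "e > 0"
    obtain t p where t: "t \<in> {0<..<1}" "\<bar>t - t0\<bar> < e" "h t p \<le> a"
      using visc_subsol_sublevel_nearby[OF assms(2,3) t0 e] by blast
    then have "\<not> R \<le> \<bar>p\<bar>" using R[of t p] by force
    then have "(t, p) \<in> ?Z" using t by auto
    then show "\<exists>y\<in>fst ` ?Z. dist y t0 < e" using t(2) by (force simp: dist_real_def)
  qed
  then show "\<exists>p. h t0 p \<le> a" by auto
qed

definition periodic_subsol_levels :: "(real \<Rightarrow> real \<Rightarrow> real) \<Rightarrow> real set" where
  "periodic_subsol_levels h = {a. \<exists>u. continuous_on {0..1} u \<and> u 0 = u 1 \<and> visc_subsol h a u}"

lemma c_arc_eq_Inf: "c_arc h = Inf (periodic_subsol_levels h)"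
  by (simp add: c_arc_def periodic_subsol_levels_def)

lemma periodic_subsol_levels_nonempty:
  assumes "ham_ok h"
  shows "periodic_subsol_levels h \<noteq> {}"
proof -
  obtain B where B: "\<And>s p. s \<in> {0..1} \<Longrightarrow> \<bar>p\<bar> \<le> 0 \<Longrightarrow> \<bar>h s p\<bar> \<le> B"
    using ham_ok_bounded_on_strip[OF assms] by blast
  have "h s 0 \<le> B" if "s \<in> {0..1}" for s using B[OF that, of 0] by simp
  then have "B \<in> periodic_subsol_levels h"
    unfolding periodic_subsol_levels_def using visc_subsol_zero[of h B] by force
  then show ?thesis by blast
qed

lemma a_arc_le_periodic_subsol_levels:
  "ham_ok h \<Longrightarrow> a \<in> periodic_subsol_levels h \<Longrightarrow> a_arc h \<le> a"
  unfolding periodic_subsol_levels_def using visc_subsol_imp_a_arc_le by blast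

lemma a_arc_le_c_arc: "ham_ok h \<Longrightarrow> a_arc h \<le> c_arc h"
  unfolding c_arc_eq_Inf
  by (rule cInf_greatest[OF periodic_subsol_levels_nonempty a_arc_le_periodic_subsol_levels])

text \<open>A primitive of a continuous mean-zero selection q of the sublevel sets is periodic and,
  being differentiable, touches test functions only with derivative q.\<close>
lemma c_arc_le_of_mean_zero_selection:
  assumes "ham_ok h" "continuous_on {0..1} q" "\<And>t. t \<in> {0..1} \<Longrightarrow> h t (q t) \<le> b"
    "integral {0..1} q = 0"
  shows "c_arc h \<le> b"
proof -
  define u where "u x = integral {0..x} q" for x
  have "q integrable_on {0..1}" by (rule integrable_continuous_real[OF assms(2)])
  then have cu: "continuous_on {0..1} u" unfolding u_def by (rule indefinite_integral_continuous_1)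
  have u01: "u 0 = u 1" unfolding u_def using assms(4) by simp
  have "visc_subsol h b u"
    unfolding visc_subsol_def
  proof (intro ballI allI impI)
    fix s \<phi> \<phi>' assume s: "s \<in> {0<..<1::real}"
      and H: "(\<forall>x\<in>{0<..<1}. (\<phi> has_real_derivative \<phi>' x) (at x)) \<and> continuous_on {0<..<1} \<phi>' \<and>
         (\<exists>\<delta>>0. \<forall>y\<in>{0<..<1}. \<bar>y - s\<bar> < \<delta> \<longrightarrow> u y - \<phi> y \<le> u s - \<phi> s)"
    then obtain \<delta> where d: "\<delta> > 0" "\<forall>y\<in>{0<..<1}. \<bar>y - s\<bar> < \<delta> \<longrightarrow> u y - \<phi> y \<le> u s - \<phi> s"
      by auto
    have s1: "s \<in> {0..1}" using s by auto
    have "(u has_real_derivative q s) (at s within {0..1})"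
      unfolding u_def by (rule integral_has_real_derivative[OF assms(2) s1])
    moreover have "at s within {0..1} = at s" using s by (intro at_within_interior) simp
    ultimately have "(u has_real_derivative q s) (at s)" by simp
    then have "\<phi>' s = q s" using H s by (intro touching_test_function_deriv_eq[OF s _ _ d]) auto
    then show "h s (\<phi>' s) \<le> b" using assms(3) s1 by simp
  qed
  then have "b \<in> periodic_subsol_levels h" unfolding periodic_subsol_levels_def using cu u01 by blast
  then show ?thesis unfolding c_arc_eq_Inf
    by (rule cInf_lower) (use a_arc_le_periodic_subsol_levels[OF assms(1)] in \<open>auto intro: bdd_belowI[of _ "a_arc h"]\<close>)
qed

lemma convex_combination_level_max_reflect:
  assumes h: "ham_ok h" and h': "ham_ok h'" and reflect: "\<And>s p. h' s p = h (1 - s) (- p)"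
    and b: "a_arc h \<le> b" and t: "t \<in> {0..1}" and l: "0 \<le> l" "l \<le> 1"
  shows "h t (l * level_max h t b - (1 - l) * level_max h' (1 - t) b) \<le> b"
proof -
  have t': "1 - t \<in> {0..1}" using t by auto
  have g: "\<exists>p. h t p \<le> b" using a_arc_le_iff[OF h] b t by blast
  have g': "\<exists>p. h' (1 - t) p \<le> b"
    using a_arc_le_iff[OF h'] a_arc_reflect[of h' h, OF reflect] b t' by auto
  let ?x = "level_max h t b" let ?x' = "- level_max h' (1 - t) b"
  have hx: "h t ?x = b" by (rule level_max_root[OF h t g])
  have hx': "h t ?x' = b"
    using level_max_root[OF h' t' g'] reflect[of "1 - t" "level_max h' (1 - t) b"] by simp
  have "?x' \<le> ?x" using le_level_max[OF h t, of ?x' b] hx' by simp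
  then have "?x' \<le> l * ?x + (1 - l) * ?x'" "l * ?x + (1 - l) * ?x' \<le> ?x"
    using l mult_left_mono[of ?x' ?x l] mult_left_mono[of ?x' ?x "1 - l"]
    by (simp_all add: algebra_simps)
  then show ?thesis using ham_ok_sublevel_interval[OF h t, of ?x' b ?x] hx hx' by simp
qed

text \<open>With l = I' / (I + I') the selection l \<cdot> level_max h t b - (1 - l) \<cdot> level_max h' (1 - t) b
  of the sublevel sets has mean zero.\<close>
lemma c_arc_le_of_positive_integrals:
  assumes h: "ham_ok h" and h': "ham_ok h'" and reflect: "\<And>s p. h' s p = h (1 - s) (- p)"
    and b: "a_arc h < b"
    and I: "0 < integral {0..1} (\<lambda>t. level_max h t b)"
    and I': "0 < integral {0..1} (\<lambda>t. level_max h' t b)"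
  shows "c_arc h \<le> b"
proof -
  have b': "a_arc h' < b" using b a_arc_reflect[of h' h, OF reflect] by simp
  define i where "i = integral {0..1} (\<lambda>t. level_max h t b)"
  define i' where "i' = integral {0..1} (\<lambda>t. level_max h' t b)"
  define l where "l = i' / (i + i')"
  have l01: "0 \<le> l" "l \<le> 1" using I I' by (auto simp: l_def i_def i'_def field_simps)
  define q where "q t = l * level_max h t b - (1 - l) * level_max h' (1 - t) b" for t
  have c: "continuous_on {0..1} (\<lambda>t. level_max h t b)" by (rule continuous_on_level_max[OF h b])
  have c': "continuous_on {0..1} (\<lambda>t. level_max h' (1 - t) b)"
    by (rule continuous_on_compose2[OF continuous_on_level_max[OF h' b']])
      (auto intro!: continuous_intros)
  have "integral {0..1} q = 0"
  proof -
    have int: "(\<lambda>t. l * level_max h t b) integrable_on {0..1}"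
      "(\<lambda>t. (1 - l) * level_max h' (1 - t) b) integrable_on {0..1}"
      using c c' by (auto intro!: integrable_continuous_real continuous_intros)
    have "integral {0..1} (\<lambda>t. level_max h' (1 - t) b) = i'"
      unfolding i'_def by (rule integral_reflect01[OF integrable_level_max[OF h' less_imp_le[OF b']]])
    then have "integral {0..1} q = l * i - (1 - l) * i'"
      unfolding q_def i_def using int by (simp add: integral_diff)
    also have "\<dots> = 0" using I I' by (simp add: l_def i_def i'_def field_simps)
    finally show ?thesis .
  qed
  moreover have "continuous_on {0..1} q" unfolding q_def by (intro continuous_intros c c')
  moreover have "h t (q t) \<le> b" if "t \<in> {0..1}" for t
    unfolding q_def
    by (rule convex_combination_level_max_reflect[OF h h' reflect less_imp_le[OF b] that l01])
  ultimately show ?thesis by (intro c_arc_le_of_mean_zero_selection[OF h]) auto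
qed

section \<open>Walks in a weighted digraph\<close>

lemma tendsto_sum_list:
  fixes f :: "nat \<Rightarrow> 'e \<Rightarrow> 'a::topological_monoid_add"
  assumes "\<And>e. e \<in> set p \<Longrightarrow> (\<lambda>k. f k e) \<longlonglongrightarrow> g e"
  shows "(\<lambda>k. \<Sum>e\<leftarrow>p. f k e) \<longlonglongrightarrow> (\<Sum>e\<leftarrow>p. g e)"
  using assms
proof (induction p)
  case (Cons e p)
  then have "(\<lambda>k. f k e) \<longlonglongrightarrow> g e" "(\<lambda>k. \<Sum>e\<leftarrow>p. f k e) \<longlonglongrightarrow> (\<Sum>e\<leftarrow>p. g e)" by simp_all
  from tendsto_add[OF this] show ?case by simp
qed simp

fun walk :: "'e set \<Rightarrow> ('e \<Rightarrow> 'v) \<Rightarrow> ('e \<Rightarrow> 'v) \<Rightarrow> 'v \<Rightarrow> 'e list \<Rightarrow> 'v \<Rightarrow> bool" where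
  "walk E src tgt x [] y \<longleftrightarrow> x = y"
| "walk E src tgt x (e # p) y \<longleftrightarrow> e \<in> E \<and> src e = x \<and> walk E src tgt (tgt e) p y"

lemma walk_append:
  "walk E src tgt x (p @ q) z \<longleftrightarrow> (\<exists>y. walk E src tgt x p y \<and> walk E src tgt y q z)"
  by (induction p arbitrary: x) auto

lemma walk_subset: "walk E src tgt x p y \<Longrightarrow> set p \<subseteq> E"
  by (induction p arbitrary: x) auto

lemma walk_telescope:
  fixes u :: "'v \<Rightarrow> real"
  assumes "\<And>e. e \<in> E \<Longrightarrow> u (src e) - u (tgt e) \<le> w e" "walk E src tgt x p y"
  shows "u x - u y \<le> (\<Sum>e\<leftarrow>p. w e)"
  using assms(2)
proof (induction p arbitrary: x)
  case (Cons e p)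
  then have "u (tgt e) - u y \<le> (\<Sum>e\<leftarrow>p. w e)" "e \<in> E" "src e = x" by auto
  moreover have "u x - u (tgt e) \<le> w e" using assms(1)[of e] Cons by auto
  ultimately have "u x - u y \<le> w e + (\<Sum>e\<leftarrow>p. w e)" by linarith
  then show ?case by simp
qed simp

lemma rtrancl_imp_walk:
  assumes "(x, y) \<in> {(src e, tgt e) | e. e \<in> E}\<^sup>*"
  shows "\<exists>p. walk E src tgt x p y"
  using assms
proof (induction rule: rtrancl_induct)
  case base
  have "walk E src tgt x [] x" by simp
  then show ?case ..
next
  case (step y z)
  then obtain p e where "walk E src tgt x p y" "e \<in> E" "y = src e" "z = tgt e" by auto
  then have "walk E src tgt x (p @ [e]) z" by (auto simp: walk_append)
  then show ?case ..
qed

lemma closed_walk_split: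
  assumes "walk E src tgt x p x" "i < j" "j < length p" "src (p ! i) = src (p ! j)"
  obtains p1 c p3 where "p = p1 @ c @ p3" "c \<noteq> []" "p3 \<noteq> []"
    "walk E src tgt (src (p ! i)) c (src (p ! i))" "walk E src tgt x (p1 @ p3) x"
proof -
  define p1 c p3 where "p1 = take i p" and "c = take (j - i) (drop i p)" and "p3 = drop j p"
  have dj: "drop (j - i) (drop i p) = p3" unfolding p3_def using assms(2) by simp
  have decomp: "p = p1 @ c @ p3" unfolding p1_def c_def using dj by (metis append_take_drop_id)
  from assms(1) obtain y1 y2 where w1: "walk E src tgt x p1 y1"
    and w2: "walk E src tgt y1 c y2" and w3: "walk E src tgt y2 p3 x"
    unfolding decomp walk_append by blast
  have "walk E src tgt y1 (drop i p) x" using w2 w3 dj unfolding c_def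
    by (metis append_take_drop_id walk_append)
  moreover have "drop i p = p ! i # drop (Suc i) p" using assms(2,3) by (simp add: Cons_nth_drop_Suc)
  ultimately have y1: "y1 = src (p ! i)" by simp
  have p3: "p3 = p ! j # drop (Suc j) p" unfolding p3_def using assms(3) by (simp add: Cons_nth_drop_Suc)
  then have "y2 = src (p ! j)" using w3 by simp
  then have "walk E src tgt (src (p ! i)) c (src (p ! i))" "walk E src tgt x (p1 @ p3) x"
    using w1 w2 w3 y1 assms(4) by (auto simp: walk_append)
  moreover have "c \<noteq> []" unfolding c_def using assms(2,3) by simp
  ultimately show ?thesis using that decomp p3 by blast
qed

text \<open>A closed walk longer than the number of vertices repeats a vertex, so it splits into two
  shorter closed walks.\<close>
lemma closed_walks_nonneg_if_short:
  fixes w :: "'e \<Rightarrow> real"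
  assumes "finite V" "src ` E \<subseteq> V"
    and short: "\<And>p x. walk E src tgt x p x \<Longrightarrow> length p \<le> card V \<Longrightarrow> 0 \<le> (\<Sum>e\<leftarrow>p. w e)"
    and "walk E src tgt x p x"
  shows "0 \<le> (\<Sum>e\<leftarrow>p. w e)"
  using assms(4)
proof (induction "length p" arbitrary: p x rule: less_induct)
  case less
  show ?case
  proof (cases "length p \<le> card V")
    case True
    then show ?thesis using short less.prems by blast
  next
    case False
    have "set (map src p) \<subseteq> V" using walk_subset[OF less.prems] assms(2) by auto
    then have "card (set (map src p)) \<le> card V" by (rule card_mono[OF assms(1)])
    then have "\<not> distinct (map src p)" using False distinct_card[of "map src p"] by auto
    then obtain i j where "i < j" "j < length p" "src (p ! i) = src (p ! j)"
      unfolding distinct_conv_nth by (metis length_map linorder_neqE_nat nth_map)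
    then obtain p1 c p3 where p: "p = p1 @ c @ p3" "c \<noteq> []" "p3 \<noteq> []"
      and walks: "walk E src tgt (src (p ! i)) c (src (p ! i))" "walk E src tgt x (p1 @ p3) x"
      using closed_walk_split[OF less.prems] by metis
    have "length c < length p" "length (p1 @ p3) < length p" using p by auto
    then have "0 \<le> (\<Sum>e\<leftarrow>c. w e)" "0 \<le> (\<Sum>e\<leftarrow>p1 @ p3. w e)" using less.hyps walks by blast+
    then show ?thesis by (subst p(1)) simp
  qed
qed

locale conservative_digraph =
  fixes E :: "'e set" and src tgt :: "'e \<Rightarrow> 'v" and w :: "'e \<Rightarrow> real"
  assumes strongly_connected:
      "\<And>x y. x \<in> vertices E src tgt \<Longrightarrow> y \<in> vertices E src tgt \<Longrightarrow> \<exists>p. walk E src tgt x p y"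
    and closed_walk_nonneg: "\<And>x p. walk E src tgt x p x \<Longrightarrow> 0 \<le> (\<Sum>e\<leftarrow>p. w e)"
begin

definition walk_dist :: "'v \<Rightarrow> 'v \<Rightarrow> real" where
  "walk_dist x z = Inf {(\<Sum>e\<leftarrow>p. w e) | p. walk E src tgt x p z}"

lemma walk_dist_le:
  assumes "x \<in> vertices E src tgt" "z \<in> vertices E src tgt" "walk E src tgt x p z"
  shows "walk_dist x z \<le> (\<Sum>e\<leftarrow>p. w e)"
proof -
  obtain q where q: "walk E src tgt z q x" using strongly_connected assms(1,2) by blast
  have "- (\<Sum>e\<leftarrow>q. w e) \<le> (\<Sum>e\<leftarrow>p'. w e)" if "walk E src tgt x p' z" for p'
  proof -
    have "0 \<le> (\<Sum>e\<leftarrow>p' @ q. w e)"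
      by (rule closed_walk_nonneg) (use that q in \<open>auto simp: walk_append\<close>)
    then show ?thesis by simp
  qed
  then have "bdd_below {(\<Sum>e\<leftarrow>p. w e) | p. walk E src tgt x p z}"
    by (intro bdd_belowI[of _ "- (\<Sum>e\<leftarrow>q. w e)"]) blast
  then show ?thesis unfolding walk_dist_def using assms(3) by (auto intro: cInf_lower)
qed

lemma walk_dist_greatest:
  assumes "x \<in> vertices E src tgt" "z \<in> vertices E src tgt"
    and "\<And>p. walk E src tgt x p z \<Longrightarrow> m \<le> (\<Sum>e\<leftarrow>p. w e)"
  shows "m \<le> walk_dist x z"
  unfolding walk_dist_def using assms strongly_connected[OF assms(1,2)] by (auto intro: cInf_greatest)

lemma walk_dist_triangle:
  assumes "e \<in> E" "z \<in> vertices E src tgt"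
  shows "walk_dist (src e) z \<le> w e + walk_dist (tgt e) z"
proof -
  have v: "src e \<in> vertices E src tgt" "tgt e \<in> vertices E src tgt"
    using assms(1) unfolding vertices_def by auto
  have "walk_dist (src e) z - w e \<le> (\<Sum>e\<leftarrow>p. w e)" if "walk E src tgt (tgt e) p z" for p
    using walk_dist_le[OF v(1) assms(2), of "e # p"] that assms(1) by simp
  then have "walk_dist (src e) z - w e \<le> walk_dist (tgt e) z"
    by (rule walk_dist_greatest[OF v(2) assms(2)])
  then show ?thesis by simp
qed

lemma exists_potential:
  assumes "E \<noteq> {}"
  shows "\<exists>u. \<forall>e\<in>E. u (src e) - u (tgt e) \<le> w e"
proof -
  obtain e0 where "e0 \<in> E" using assms by blast
  then have "src e0 \<in> vertices E src tgt" unfolding vertices_def by blast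
  then show ?thesis using walk_dist_triangle by (intro exI[of _ "\<lambda>x. walk_dist x (src e0)"]) force
qed

lemma walk_dist_le_Min_out_edges:
  assumes "finite E" "x \<in> vertices E src tgt" "z \<in> vertices E src tgt" "out_edges E src x \<noteq> {}"
  shows "walk_dist x z \<le> Min ((\<lambda>e. walk_dist (tgt e) z + w e) ` out_edges E src x)"
proof (rule Min.boundedI)
  show "finite ((\<lambda>e. walk_dist (tgt e) z + w e) ` out_edges E src x)"
    using assms(1) unfolding out_edges_def by simp
  show "(\<lambda>e. walk_dist (tgt e) z + w e) ` out_edges E src x \<noteq> {}" using assms(4) by simp
  fix d assume "d \<in> (\<lambda>e. walk_dist (tgt e) z + w e) ` out_edges E src x"
  then obtain e where e: "e \<in> E" "src e = x" "d = walk_dist (tgt e) z + w e"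
    unfolding out_edges_def by blast
  then show "walk_dist x z \<le> d" using walk_dist_triangle[OF e(1) assms(3)] by simp
qed

lemma Min_out_edges_le_walk_dist:
  assumes "finite E" "x \<in> vertices E src tgt" "z \<in> vertices E src tgt" "x \<noteq> z"
  shows "Min ((\<lambda>e. walk_dist (tgt e) z + w e) ` out_edges E src x) \<le> walk_dist x z"
proof (rule walk_dist_greatest[OF assms(2,3)])
  fix p assume p: "walk E src tgt x p z"
  then obtain e p' where pp: "p = e # p'" using assms(4) by (cases p) auto
  then have e: "e \<in> out_edges E src x" "walk E src tgt (tgt e) p' z"
    using p unfolding out_edges_def by auto
  then have "tgt e \<in> vertices E src tgt" unfolding out_edges_def vertices_def by auto
  then have "walk_dist (tgt e) z \<le> (\<Sum>e\<leftarrow>p'. w e)" by (rule walk_dist_le[OF _ assms(3) e(2)])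
  moreover have "Min ((\<lambda>e. walk_dist (tgt e) z + w e) ` out_edges E src x) \<le> walk_dist (tgt e) z + w e"
    using assms(1) e(1) unfolding out_edges_def by (intro Min_le) auto
  ultimately show "Min ((\<lambda>e. walk_dist (tgt e) z + w e) ` out_edges E src x) \<le> (\<Sum>e\<leftarrow>p. w e)"
    using pp by simp
qed

text \<open>At a vertex z of a closed walk of weight zero the distance to z vanishes and is attained
  by the walk, so the dynamic programming equation holds at z as well.\<close>
lemma exists_min_fixed_point:
  assumes "finite E" and out: "\<And>x. x \<in> vertices E src tgt \<Longrightarrow> out_edges E src x \<noteq> {}"
    and C: "walk E src tgt z C z" "C \<noteq> []" "(\<Sum>e\<leftarrow>C. w e) = 0"
  shows "\<exists>u. \<forall>x\<in>vertices E src tgt. u x = Min ((\<lambda>e. u (tgt e) + w e) ` out_edges E src x)"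
proof -
  obtain e0 C' where C0: "C = e0 # C'" using C(2) by (cases C) auto
  have z: "z \<in> vertices E src tgt" using C C0 unfolding vertices_def by auto
  have "Min ((\<lambda>e. walk_dist (tgt e) z + w e) ` out_edges E src z) \<le> walk_dist z z"
  proof -
    have e0: "e0 \<in> out_edges E src z" using C C0 unfolding out_edges_def by auto
    then have "tgt e0 \<in> vertices E src tgt" unfolding out_edges_def vertices_def by auto
    then have "walk_dist (tgt e0) z \<le> (\<Sum>e\<leftarrow>C'. w e)" using C C0 by (intro walk_dist_le[OF _ z]) auto
    moreover have "Min ((\<lambda>e. walk_dist (tgt e) z + w e) ` out_edges E src z) \<le> walk_dist (tgt e0) z + w e0"
      using assms(1) e0 unfolding out_edges_def by (intro Min_le) auto
    moreover have "0 \<le> walk_dist z z" using closed_walk_nonneg by (intro walk_dist_greatest[OF z z])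
    ultimately show ?thesis using C(3) C0 by simp
  qed
  then have "walk_dist x z = Min ((\<lambda>e. walk_dist (tgt e) z + w e) ` out_edges E src x)"
    if "x \<in> vertices E src tgt" for x
  proof (cases "x = z")
    case True
    then show ?thesis using walk_dist_le_Min_out_edges[OF assms(1) that z out[OF that]] \<open>Min _ \<le> _\<close>
      by simp
  next
    case False
    then show ?thesis using walk_dist_le_Min_out_edges[OF assms(1) that z out[OF that]]
      Min_out_edges_le_walk_dist[OF assms(1) that z] by simp
  qed
  then show ?thesis by (intro exI[of _ "\<lambda>x. walk_dist x z"]) simp
qed

end

section \<open>The critical value of the network\<close>

locale network =
  fixes E :: "'e set" and src tgt :: "'e \<Rightarrow> 'v" and rv :: "'e \<Rightarrow> 'e"
    and H :: "'e \<Rightarrow> real \<Rightarrow> real \<Rightarrow> real"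
  assumes network_ok: "network_ok E src tgt rv H"
begin

abbreviation "V \<equiv> vertices E src tgt"
abbreviation "a0 \<equiv> a_zero E src tgt H"
abbreviation "crit \<equiv> crit_value E src tgt H"

lemma finite_E: "finite E" and E_nonempty: "E \<noteq> {}"
  using network_ok unfolding network_ok_def by blast+

lemma rv_in: "e \<in> E \<Longrightarrow> rv e \<in> E" and rv_rv: "e \<in> E \<Longrightarrow> rv (rv e) = e"
  and src_rv: "e \<in> E \<Longrightarrow> src (rv e) = tgt e" and tgt_rv: "e \<in> E \<Longrightarrow> tgt (rv e) = src e"
  using network_ok unfolding network_ok_def by blast+

lemma H_rv: "e \<in> E \<Longrightarrow> H (rv e) s p = H e (1 - s) (- p)"
  using network_ok unfolding network_ok_def by blast+

lemma ham_ok_H: "e \<in> E \<Longrightarrow> ham_ok (H e)"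
  using network_ok unfolding network_ok_def by blast+

lemma strongly_connected:
  assumes "x \<in> V" "y \<in> V"
  shows "\<exists>p. walk E src tgt x p y"
proof -
  have "(x, y) \<in> {(src e, tgt e) | e. e \<in> E}\<^sup>*"
    using network_ok assms unfolding network_ok_def by blast
  then show ?thesis by (rule rtrancl_imp_walk)
qed

lemma out_edges_nonempty:
  assumes "x \<in> V"
  shows "out_edges E src x \<noteq> {}"
proof -
  from assms obtain e where "e \<in> E" "x = src e \<or> x = tgt e" unfolding vertices_def by blast
  then have "e \<in> out_edges E src x \<or> rv e \<in> out_edges E src x"
    unfolding out_edges_def using rv_in src_rv by blast
  then show ?thesis by blast
qed

lemma a_arc_rv:
  assumes "e \<in> E"
  shows "a_arc (H (rv e)) = a_arc (H e)"
  using H_rv[OF assms] by (rule a_arc_reflect)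

lemma a_zero_ge:
  assumes "e \<in> E"
  shows "src e \<noteq> tgt e \<Longrightarrow> a_arc (H e) \<le> a0" and "src e = tgt e \<Longrightarrow> c_arc (H e) \<le> a0"
proof -
  let ?A = "(\<lambda>e. a_arc (H e)) ` {e \<in> E. src e \<noteq> tgt e} \<union> (\<lambda>e. c_arc (H e)) ` {e \<in> E. src e = tgt e}"
  have fin: "finite ?A" using finite_E by simp
  show "src e \<noteq> tgt e \<Longrightarrow> a_arc (H e) \<le> a0" "src e = tgt e \<Longrightarrow> c_arc (H e) \<le> a0"
    unfolding a_zero_def using assms by (intro Max_ge[OF fin]; blast)+
qed

lemma a_zero_cases:
  obtains e where "e \<in> E" "src e \<noteq> tgt e" "a_arc (H e) = a0"
    | e where "e \<in> E" "src e = tgt e" "c_arc (H e) = a0"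
proof -
  let ?A1 = "(\<lambda>e. a_arc (H e)) ` {e \<in> E. src e \<noteq> tgt e}"
  let ?A2 = "(\<lambda>e. c_arc (H e)) ` {e \<in> E. src e = tgt e}"
  have "finite (?A1 \<union> ?A2)" using finite_E by simp
  moreover have "?A1 \<union> ?A2 \<noteq> {}" using E_nonempty by blast
  ultimately have "a0 \<in> ?A1 \<union> ?A2" unfolding a_zero_def by (rule Max_in)
  then show ?thesis
  proof
    assume "a0 \<in> ?A1"
    then obtain e where "e \<in> E" "src e \<noteq> tgt e" "a0 = a_arc (H e)" by blast
    then show ?thesis by (intro that(1)) auto
  next
    assume "a0 \<in> ?A2"
    then obtain e where "e \<in> E" "src e = tgt e" "a0 = c_arc (H e)" by blast
    then show ?thesis by (intro that(2)) auto
  qed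
qed

lemma a_arc_le_a_zero:
  assumes "e \<in> E"
  shows "a_arc (H e) \<le> a0"
proof (cases "src e = tgt e")
  case True
  then show ?thesis using a_arc_le_c_arc[OF ham_ok_H[OF assms]] a_zero_ge(2)[OF assms] by linarith
next
  case False
  then show ?thesis by (rule a_zero_ge(1)[OF assms])
qed

lemma tendsto_sigma_right:
  assumes "e \<in> E" "a0 \<le> b" "\<And>k. b \<le> a k" "a \<longlonglongrightarrow> b"
  shows "(\<lambda>k. sigma H (a k) e) \<longlonglongrightarrow> sigma H b e"
  unfolding sigma_eq_integral_level_max
  by (rule tendsto_integral_level_max_right[OF ham_ok_H[OF assms(1)] _ assms(3,4)])
    (use a_arc_le_a_zero[OF assms(1)] assms(2) in linarith)

lemma tendsto_sigma_left:
  assumes "e \<in> E" "a_arc (H e) < b" "\<And>k. a_arc (H e) \<le> a k" "\<And>k. a k \<le> b" "a \<longlonglongrightarrow> b"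
  shows "(\<lambda>k. sigma H (a k) e) \<longlonglongrightarrow> sigma H b e"
  unfolding sigma_eq_integral_level_max
  by (rule tendsto_integral_level_max_left[OF ham_ok_H[OF assms(1)] assms(2-5)])

definition weight :: "real \<Rightarrow> 'e \<Rightarrow> real" where
  "weight a e = sigma H a (rv e)"

lemma DFE_subsol_iff: "DFE_subsol E src tgt H a u \<longleftrightarrow> (\<forall>e\<in>E. u (src e) - u (tgt e) \<le> weight a e)"
proof
  assume u: "DFE_subsol E src tgt H a u"
  show "\<forall>e\<in>E. u (src e) - u (tgt e) \<le> weight a e"
  proof
    fix e assume e: "e \<in> E"
    have "u (tgt (rv e)) - u (src (rv e)) \<le> sigma H a (rv e)"
      using u rv_in[OF e] unfolding DFE_subsol_def by blast
    then show "u (src e) - u (tgt e) \<le> weight a e" using src_rv[OF e] tgt_rv[OF e] by (simp add: weight_def)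
  qed
next
  assume w: "\<forall>e\<in>E. u (src e) - u (tgt e) \<le> weight a e"
  show "DFE_subsol E src tgt H a u" unfolding DFE_subsol_def
  proof
    fix e assume e: "e \<in> E"
    have "u (src (rv e)) - u (tgt (rv e)) \<le> weight a (rv e)" using w rv_in[OF e] by blast
    then show "u (tgt e) - u (src e) \<le> sigma H a e"
      using src_rv[OF e] tgt_rv[OF e] rv_rv[OF e] by (simp add: weight_def)
  qed
qed

lemma DFE_subsol_iff_closed_walks_nonneg:
  "(\<exists>u. DFE_subsol E src tgt H a u) \<longleftrightarrow>
     (\<forall>x p. walk E src tgt x p x \<longrightarrow> 0 \<le> (\<Sum>e\<leftarrow>p. weight a e))"
proof
  assume "\<exists>u. DFE_subsol E src tgt H a u"
  then obtain u where u: "\<forall>e\<in>E. u (src e) - u (tgt e) \<le> weight a e" using DFE_subsol_iff by blast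
  have "0 \<le> (\<Sum>e\<leftarrow>p. weight a e)" if "walk E src tgt x p x" for x p
    using walk_telescope[where u = u and w = "weight a", OF _ that] u by simp
  then show "\<forall>x p. walk E src tgt x p x \<longrightarrow> 0 \<le> (\<Sum>e\<leftarrow>p. weight a e)" by blast
next
  assume "\<forall>x p. walk E src tgt x p x \<longrightarrow> 0 \<le> (\<Sum>e\<leftarrow>p. weight a e)"
  then interpret conservative_digraph E src tgt "weight a"
    using strongly_connected by unfold_locales auto
  show "\<exists>u. DFE_subsol E src tgt H a u"
    using exists_potential[OF E_nonempty] DFE_subsol_iff by blast
qed

definition subsol_levels :: "real set" where
  "subsol_levels = {a. a0 \<le> a \<and> (\<exists>u. DFE_subsol E src tgt H a u)}"

lemma crit_eq_Inf: "crit = Inf subsol_levels"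
  unfolding crit_value_def subsol_levels_def ..

lemma subsol_levels_nonempty: "subsol_levels \<noteq> {}"
proof -
  have "\<forall>e\<in>E. \<exists>B. \<forall>s\<in>{0..1}. H e s 0 \<le> B"
  proof
    fix e assume e: "e \<in> E"
    obtain B where B: "\<And>s p. s \<in> {0..1} \<Longrightarrow> \<bar>p\<bar> \<le> 0 \<Longrightarrow> \<bar>H e s p\<bar> \<le> B"
      using ham_ok_bounded_on_strip[OF ham_ok_H[OF e]] by blast
    have "H e s 0 \<le> B" if "s \<in> {0..1}" for s using B[OF that, of 0] by simp
    then show "\<exists>B. \<forall>s\<in>{0..1}. H e s 0 \<le> B" by blast
  qed
  from bchoice[OF this] obtain B where B: "\<forall>e\<in>E. \<forall>s\<in>{0..1}. H e s 0 \<le> B e" by blast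
  define a where "a = max a0 (Max (B ` E))"
  have H0: "H e t 0 \<le> a" if "e \<in> E" "t \<in> {0..1}" for e t
  proof -
    have "H e t 0 \<le> B e" using B that by blast
    also have "\<dots> \<le> Max (B ` E)" using that(1) finite_E by simp
    also have "\<dots> \<le> a" unfolding a_def by simp
    finally show ?thesis .
  qed
  have "0 \<le> sigma H a e" if "e \<in> E" for e
    unfolding sigma_eq_integral_level_max
    by (rule integral_level_max_nonneg[OF ham_ok_H[OF that] H0[OF that]])
  then have "DFE_subsol E src tgt H a (\<lambda>_. 0)" unfolding DFE_subsol_def by simp
  moreover have "a0 \<le> a" unfolding a_def by simp
  ultimately have "a \<in> subsol_levels" unfolding subsol_levels_def by blast
  then show ?thesis by blast
qed

lemma subsol_levels_upward_closed:
  assumes "a \<in> subsol_levels" "a \<le> b"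
  shows "b \<in> subsol_levels"
proof -
  obtain u where u: "DFE_subsol E src tgt H a u" and a: "a0 \<le> a"
    using assms(1) unfolding subsol_levels_def by blast
  have "DFE_subsol E src tgt H b u" unfolding DFE_subsol_def
  proof
    fix e assume e: "e \<in> E"
    then have "u (tgt e) - u (src e) \<le> sigma H a e" using u unfolding DFE_subsol_def by blast
    also have "\<dots> \<le> sigma H b e" unfolding sigma_eq_integral_level_max
      using a_arc_le_a_zero[OF e] a by (intro integral_level_max_mono[OF ham_ok_H[OF e] _ assms(2)]) simp
    finally show "u (tgt e) - u (src e) \<le> sigma H b e" .
  qed
  then show ?thesis using a assms(2) unfolding subsol_levels_def by auto
qed

lemma bdd_below_subsol_levels: "bdd_below subsol_levels"
  by (intro bdd_belowI[of _ a0]) (simp add: subsol_levels_def)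

lemma a_zero_le_crit: "a0 \<le> crit"
  unfolding crit_eq_Inf
  by (rule cInf_greatest[OF subsol_levels_nonempty]) (simp add: subsol_levels_def)

lemma above_crit_in_subsol_levels:
  assumes "crit < b"
  shows "b \<in> subsol_levels"
proof -
  obtain a where "a \<in> subsol_levels" "a < b"
    using assms cInf_less_iff[OF subsol_levels_nonempty bdd_below_subsol_levels]
    unfolding crit_eq_Inf by blast
  then show ?thesis using subsol_levels_upward_closed by simp
qed

lemma tendsto_weight_right:
  assumes "set p \<subseteq> E" "a0 \<le> b" "\<And>k. b \<le> a k" "a \<longlonglongrightarrow> b"
  shows "(\<lambda>k. \<Sum>e\<leftarrow>p. weight (a k) e) \<longlonglongrightarrow> (\<Sum>e\<leftarrow>p. weight b e)"
  unfolding weight_def using assms rv_in by (intro tendsto_sum_list tendsto_sigma_right) auto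

lemma tendsto_weight_left:
  assumes "set p \<subseteq> E" "a0 < b" "\<And>k. a0 \<le> a k" "\<And>k. a k \<le> b" "a \<longlonglongrightarrow> b"
  shows "(\<lambda>k. \<Sum>e\<leftarrow>p. weight (a k) e) \<longlonglongrightarrow> (\<Sum>e\<leftarrow>p. weight b e)"
proof (unfold weight_def, rule tendsto_sum_list)
  fix e assume "e \<in> set p"
  then have e: "rv e \<in> E" using assms(1) rv_in by blast
  have "a_arc (H (rv e)) < b" "a_arc (H (rv e)) \<le> a k" for k
    using a_arc_le_a_zero[OF e] assms(2) assms(3)[of k] by linarith+
  then show "(\<lambda>k. sigma H (a k) (rv e)) \<longlonglongrightarrow> sigma H b (rv e)"
    by (rule tendsto_sigma_left[OF e _ _ assms(4,5)])
qed

lemma crit_closed_walk_nonneg: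
  assumes "walk E src tgt x p x"
  shows "0 \<le> (\<Sum>e\<leftarrow>p. weight crit e)"
proof -
  obtain a where a_lim: "a \<longlonglongrightarrow> crit" and a_gt: "\<And>k. crit < a k"
    using approx_from_above[of crit] by blast
  have "a k \<in> subsol_levels" for k by (rule above_crit_in_subsol_levels[OF a_gt])
  then have "0 \<le> (\<Sum>e\<leftarrow>p. weight (a k) e)" for k
    using assms DFE_subsol_iff_closed_walks_nonneg unfolding subsol_levels_def by blast
  moreover have "(\<lambda>k. \<Sum>e\<leftarrow>p. weight (a k) e) \<longlonglongrightarrow> (\<Sum>e\<leftarrow>p. weight crit e)"
    using walk_subset[OF assms] a_zero_le_crit a_gt less_imp_le by (intro tendsto_weight_right[OF _ _ _ a_lim]) auto
  ultimately show ?thesis by (intro LIMSEQ_le_const) auto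
qed

definition short_closed_walks :: "'e list set" where
  "short_closed_walks = {p. set p \<subseteq> E \<and> length p \<le> card V \<and> p \<noteq> [] \<and> (\<exists>x. walk E src tgt x p x)}"

lemma finite_short_closed_walks: "finite short_closed_walks"
proof -
  have "short_closed_walks \<subseteq> {p. set p \<subseteq> E \<and> length p \<le> card V}"
    unfolding short_closed_walks_def by blast
  then show ?thesis using finite_lists_length_le[OF finite_E] by (rule finite_subset)
qed

lemma subsol_levels_if_short_closed_walks_nonneg:
  assumes "a0 \<le> a" "\<And>p. p \<in> short_closed_walks \<Longrightarrow> 0 \<le> (\<Sum>e\<leftarrow>p. weight a e)"
  shows "a \<in> subsol_levels"
proof -
  have "0 \<le> (\<Sum>e\<leftarrow>p. weight a e)" if "walk E src tgt x p x" for x p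
  proof (rule closed_walks_nonneg_if_short[OF _ _ _ that])
    show "finite V" using finite_E unfolding vertices_def by simp
    show "src ` E \<subseteq> V" unfolding vertices_def by blast
    fix p x assume w: "walk E src tgt x p x" and l: "length p \<le> card V"
    show "0 \<le> (\<Sum>e\<leftarrow>p. weight a e)"
    proof (cases "p = []")
      case False
      then have "p \<in> short_closed_walks"
        using w l walk_subset[OF w] unfolding short_closed_walks_def by blast
      then show ?thesis by (rule assms(2))
    qed simp
  qed
  then show ?thesis using assms(1) DFE_subsol_iff_closed_walks_nonneg unfolding subsol_levels_def by blast
qed

text \<open>Above a0 the weights are left continuous in the level; if no closed walk had weight zero,
  the finitely many short closed walks would stay positive slightly below crit, contradicting
  the minimality of crit.\<close>
lemma zero_closed_walk_if_crit_above_a_zero: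
  assumes "a0 < crit"
  shows "\<exists>z C. walk E src tgt z C z \<and> C \<noteq> [] \<and> (\<Sum>e\<leftarrow>C. weight crit e) = 0"
proof (rule ccontr)
  assume none: "\<not> ?thesis"
  obtain a where a_lim: "a \<longlonglongrightarrow> crit" and a_gt: "\<And>k. a0 < a k" and a_less: "\<And>k. a k < crit"
    using approx_from_below[OF assms] by blast
  have "\<forall>\<^sub>F k in sequentially. 0 < (\<Sum>e\<leftarrow>p. weight (a k) e)" if p: "p \<in> short_closed_walks" for p
  proof (rule order_tendstoD(1))
    from p obtain x where x: "walk E src tgt x p x" and "p \<noteq> []" "set p \<subseteq> E"
      unfolding short_closed_walks_def by blast
    then have "(\<Sum>e\<leftarrow>p. weight crit e) \<noteq> 0" using none by blast
    then show "0 < (\<Sum>e\<leftarrow>p. weight crit e)" using crit_closed_walk_nonneg[OF x] by simp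
    show "(\<lambda>k. \<Sum>e\<leftarrow>p. weight (a k) e) \<longlonglongrightarrow> (\<Sum>e\<leftarrow>p. weight crit e)"
      by (rule tendsto_weight_left[OF \<open>set p \<subseteq> E\<close> assms less_imp_le[OF a_gt] less_imp_le[OF a_less] a_lim])
  qed
  then have "\<forall>\<^sub>F k in sequentially. \<forall>p\<in>short_closed_walks. 0 < (\<Sum>e\<leftarrow>p. weight (a k) e)"
    by (intro eventually_ball_finite[OF finite_short_closed_walks] ballI)
  then obtain N where "\<And>p. p \<in> short_closed_walks \<Longrightarrow> 0 < (\<Sum>e\<leftarrow>p. weight (a N) e)"
    unfolding eventually_sequentially by blast
  then have "a N \<in> subsol_levels"
    using a_gt[of N] by (intro subsol_levels_if_short_closed_walks_nonneg less_imp_le) auto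
  then have "crit \<le> a N" unfolding crit_eq_Inf by (rule cInf_lower[OF _ bdd_below_subsol_levels])
  then show False using a_less[of N] by simp
qed

lemma flat_two_cycle_weight_zero:
  assumes "e \<in> E" "\<And>s. s \<in> {0..1} \<Longrightarrow> (INF p. H e s p) = b"
  shows "(\<Sum>e'\<leftarrow>[e, rv e]. weight b e') = 0"
  using integral_level_max_reflect_flat[OF ham_ok_H[OF assms(1)] ham_ok_H[OF rv_in[OF assms(1)]]
      H_rv[OF assms(1)] assms(2)] rv_rv[OF assms(1)]
  by (simp add: weight_def sigma_eq_integral_level_max)

text \<open>If both loops had positive weight at a0, they would still have positive weight slightly
  below a0, and the periodic subsolution built from them would push c_arc below a0.\<close>
lemma loop_weight_zero:
  assumes e: "e \<in> E" and a_arc_less: "a_arc (H e) < a0" and c_arc_eq: "c_arc (H e) = a0"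
    and nonneg: "0 \<le> sigma H a0 e" "0 \<le> sigma H a0 (rv e)"
  shows "sigma H a0 e = 0 \<or> sigma H a0 (rv e) = 0"
proof (rule ccontr)
  assume "\<not> ?thesis"
  then have pos: "0 < sigma H a0 e" "0 < sigma H a0 (rv e)" using nonneg by auto
  have e': "rv e \<in> E" by (rule rv_in[OF e])
  have arc': "a_arc (H (rv e)) = a_arc (H e)" by (rule a_arc_rv[OF e])
  obtain a where a_lim: "a \<longlonglongrightarrow> a0" and a_gt: "\<And>k. a_arc (H e) < a k" and a_less: "\<And>k. a k < a0"
    using approx_from_below[OF a_arc_less] by blast
  have "(\<lambda>k. sigma H (a k) e) \<longlonglongrightarrow> sigma H a0 e"
    by (rule tendsto_sigma_left[OF e a_arc_less less_imp_le[OF a_gt] less_imp_le[OF a_less] a_lim])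
  moreover have "(\<lambda>k. sigma H (a k) (rv e)) \<longlonglongrightarrow> sigma H a0 (rv e)"
    using a_arc_less a_gt unfolding arc'[symmetric]
    by (intro tendsto_sigma_left[OF e' _ _ less_imp_le[OF a_less] a_lim] less_imp_le)
  ultimately have "\<forall>\<^sub>F k in sequentially. 0 < sigma H (a k) e \<and> 0 < sigma H (a k) (rv e)"
    using pos by (intro eventually_conj order_tendstoD(1))
  then obtain N where "0 < sigma H (a N) e" "0 < sigma H (a N) (rv e)"
    unfolding eventually_sequentially by blast
  then have "c_arc (H e) \<le> a N" unfolding sigma_eq_integral_level_max
    by (intro c_arc_le_of_positive_integrals[OF ham_ok_H[OF e] ham_ok_H[OF e'] H_rv[OF e] a_gt])
  then show False using c_arc_eq a_less[of N] by simp
qed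

lemma zero_closed_walk_at_a_zero:
  assumes flat: "\<forall>e\<in>E. a_arc (H e) = a0 \<longrightarrow> (\<exists>m. \<forall>s\<in>{0..1}. (INF p. H e s p) = m)"
    and nonneg: "\<And>x p. walk E src tgt x p x \<Longrightarrow> 0 \<le> (\<Sum>e\<leftarrow>p. weight a0 e)"
  shows "\<exists>z C. walk E src tgt z C z \<and> C \<noteq> [] \<and> (\<Sum>e\<leftarrow>C. weight a0 e) = 0"
proof -
  obtain e where e: "e \<in> E" and attains: "a_arc (H e) = a0 \<or> (src e = tgt e \<and> c_arc (H e) = a0)"
    using a_zero_cases by metis
  have e': "rv e \<in> E" and rv_rv_e: "rv (rv e) = e" using rv_in rv_rv e by auto
  show ?thesis
  proof (cases "a_arc (H e) = a0")
    case True
    then obtain m where m: "\<And>s. s \<in> {0..1} \<Longrightarrow> (INF p. H e s p) = m" using flat e by blast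
    then have "a_arc (H e) = m" unfolding a_arc_def by simp
    then have "\<And>s. s \<in> {0..1} \<Longrightarrow> (INF p. H e s p) = a0" using m True by simp
    then have "(\<Sum>e'\<leftarrow>[e, rv e]. weight a0 e') = 0" by (rule flat_two_cycle_weight_zero[OF e])
    moreover have "walk E src tgt (src e) [e, rv e] (src e)" using e e' src_rv tgt_rv by simp
    ultimately show ?thesis by blast
  next
    case False
    then have loop: "src e = tgt e" and c_arc_eq: "c_arc (H e) = a0" using attains by auto
    have less: "a_arc (H e) < a0" using a_arc_le_a_zero[OF e] False by simp
    have w1: "walk E src tgt (src e) [e] (src e)" and w2: "walk E src tgt (src e) [rv e] (src e)"
      using e e' loop src_rv tgt_rv by auto
    have "0 \<le> sigma H a0 e" "0 \<le> sigma H a0 (rv e)"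
      using nonneg[OF w2] nonneg[OF w1] rv_rv_e by (simp_all add: weight_def)
    then have "sigma H a0 e = 0 \<or> sigma H a0 (rv e) = 0" by (rule loop_weight_zero[OF e less c_arc_eq])
    then show ?thesis
    proof
      assume "sigma H a0 e = 0"
      then have "(\<Sum>e'\<leftarrow>[rv e]. weight a0 e') = 0" using rv_rv_e by (simp add: weight_def)
      then show ?thesis using w2 by blast
    next
      assume "sigma H a0 (rv e) = 0"
      then have "(\<Sum>e'\<leftarrow>[e]. weight a0 e') = 0" by (simp add: weight_def)
      then show ?thesis using w1 by blast
    qed
  qed
qed

lemma crit_zero_closed_walk:
  assumes "\<forall>e\<in>E. a_arc (H e) = a0 \<longrightarrow> (\<exists>m. \<forall>s\<in>{0..1}. (INF p. H e s p) = m)"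
  shows "\<exists>z C. walk E src tgt z C z \<and> C \<noteq> [] \<and> (\<Sum>e\<leftarrow>C. weight crit e) = 0"
proof (cases "a0 < crit")
  case True
  then show ?thesis by (rule zero_closed_walk_if_crit_above_a_zero)
next
  case False
  then have "crit = a0" using a_zero_le_crit by simp
  then show ?thesis using zero_closed_walk_at_a_zero[OF assms] crit_closed_walk_nonneg by simp
qed

end

theorem theorem6p18:
  fixes E :: "'e set" and src tgt :: "'e \<Rightarrow> 'v" and rv :: "'e \<Rightarrow> 'e"
    and H :: "'e \<Rightarrow> real \<Rightarrow> real \<Rightarrow> real"
  assumes "network_ok E src tgt rv H"
    and "\<forall>e\<in>E. a_arc (H e) = a_zero E src tgt H \<longrightarrow>
           (\<exists>m. \<forall>s\<in>{0..1}. (INF p. H e s p) = m)"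
  shows "\<exists>u :: 'v \<Rightarrow> real. \<forall>x\<in>vertices E src tgt.
           u x = Min ((\<lambda>e. u (tgt e) + sigma H (crit_value E src tgt H) (rv e))
                        ` out_edges E src x)"
proof -
  interpret network E src tgt rv H using assms(1) by (rule network.intro)
  obtain z C where C: "walk E src tgt z C z" "C \<noteq> []" "(\<Sum>e\<leftarrow>C. weight crit e) = 0"
    using crit_zero_closed_walk[OF assms(2)] by blast
  interpret conservative_digraph E src tgt "weight crit"
    using strongly_connected crit_closed_walk_nonneg by unfold_locales
  have "\<exists>u. \<forall>x\<in>V. u x = Min ((\<lambda>e. u (tgt e) + weight crit e) ` out_edges E src x)"
    by (rule exists_min_fixed_point[OF finite_E out_edges_nonempty C])
  then show ?thesis unfolding weight_def .
qed

end
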